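(* Let $n\in\mathbb N$, let $A$ be a Young function satisfying (C1), (C2), (C3), let $B$ be the associated function, let $\varphi$ be a gauge function with $\lim_{r\to0^+}\varphi(r)/r^n=\infty$, and let $\psi$ be the associated gauge function. For $r>0$ let $J_r(0)=0$, $J_r(s)=s\,B^{-1}(r\varphi(s)/s^n)$ for $s>0$. Then for every $r>0$, $$\liminf_{t\to0^+}\frac{\varphi(J_r^{-1}(t))}{\psi(t)}\ge\frac{1}{\Theta^0_\psi\big(\Theta^\infty_{B^{-1}}(r)^+\big)}\quad\text{and}\quad \inf_{t>0}\frac{\varphi(J_r^{-1}(t))}{\psi(t)}\ge\frac{1}{\Theta_\psi\big(\Theta_{B^{-1}}(r)^+\big)},$$ where $\Theta(a^+)$ denotes $\lim_{\rho\to a^+}\Theta(\rho)$.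
   Context: A gauge function is a function $\varphi\colon[0,\infty)\to[0,\infty)$ that is increasing, continuous and vanishes only at $0$, and (standing assumption) such that $r\mapsto\varphi(r)/r^n$ is non-increasing on $(0,\infty)$. A Young function is a non-trivial convex $A\colon[0,\infty)\to[0,\infty]$ with $A(0)=0$; $\widetilde A(t)=\sup_{\tau\ge0}(\tau t-A(\tau))$. Conditions: (C1) if $n=1$, $\lim_{t\to\infty}t/A(t)=0$; if $n\ge2$, $\int^\infty (t/A(t))^{1/(n-1)}dt<\infty$. (C2) $0<A(t)<\infty$ for $t>0$. (C3) if $n=1$, $\lim_{t\to0^+}t/A(t)=\infty$; if $n\ge2$, $\int_0(t/A(t))^{1/(n-1)}dt=\infty$. $B=A$ if $n=1$; for $n\ge2$, $B$ is the Young conjugate of $t\mapsto t^{n'}\int_t^\infty\widetilde A(s)s^{-1-n'}ds$, $n'=n/(n-1)$. $J(0)=0$, $J(s)=sB^{-1}(\varphi(s)/s^n)$ for $s>0$, $\psi(r)=\varphi(J^{-1}(r))$. For $h\colon(0,\infty)\to(0,\infty)$ and $r>0$: $\Theta^0_h(r)=\limsup_{t\to0^+}h(rt)/h(t)$, $\Theta^\infty_h(r)=\limsup_{t\to\infty}h(rt)/h(t)$, $\Theta_h(r)=\sup_{t>0}h(rt)/h(t)$. *)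

theory Defs
  imports "HOL-Analysis.Analysis"
begin

text \<open>Gauge function (standing assumption included): nondecreasing, continuous,
  vanishing only at 0, and r \<mapsto> phi r / r^n non-increasing on (0,\<infinity>).\<close>
definition gauge :: "nat \<Rightarrow> (real \<Rightarrow> real) \<Rightarrow> bool" where
  "gauge n \<phi> \<longleftrightarrow> mono_on {0..} \<phi> \<and> continuous_on {0..} \<phi> \<and> \<phi> 0 = 0
     \<and> (\<forall>r>0. \<phi> r > 0)
     \<and> (\<forall>r s. 0 < r \<and> r \<le> s \<longrightarrow> \<phi> s / s ^ n \<le> \<phi> r / r ^ n)"

definition young_finite :: "(real \<Rightarrow> real) \<Rightarrow> bool" where
  "young_finite A \<longleftrightarrow> convex_on {0..} A \<and> A 0 = 0 \<and> (\<forall>t\<ge>0. A t \<ge> 0) \<and> (\<exists>t>0. A t \<noteq> 0)"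

definition C1 :: "nat \<Rightarrow> (real \<Rightarrow> real) \<Rightarrow> bool" where
  "C1 n A \<longleftrightarrow> (if n = 1 then ((\<lambda>t. t / A t) \<longlongrightarrow> 0) at_top
     else (\<integral>\<^sup>+ t\<in>{1..}. ennreal ((t / A t) powr (1 / (real n - 1))) \<partial>lborel) < \<infinity>)"

definition C2 :: "(real \<Rightarrow> real) \<Rightarrow> bool" where
  "C2 A \<longleftrightarrow> (\<forall>t>0. 0 < A t)"

definition C3 :: "nat \<Rightarrow> (real \<Rightarrow> real) \<Rightarrow> bool" where
  "C3 n A \<longleftrightarrow> (if n = 1 then filterlim (\<lambda>t. t / A t) at_top (at_right 0)
     else (\<integral>\<^sup>+ t\<in>{0<..1}. ennreal ((t / A t) powr (1 / (real n - 1))) \<partial>lborel) = \<infinity>)"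

definition young_conj :: "(real \<Rightarrow> real) \<Rightarrow> real \<Rightarrow> ereal" where
  "young_conj A t = (SUP \<tau>\<in>{0..}. ereal (\<tau> * t - A \<tau>))"

definition nprime :: "nat \<Rightarrow> real" where
  "nprime n = real n / (real n - 1)"

definition Efun :: "nat \<Rightarrow> (real \<Rightarrow> real) \<Rightarrow> real \<Rightarrow> ennreal" where
  "Efun n A t = ennreal (t powr nprime n) *
     (\<integral>\<^sup>+ s\<in>{t..}. e2ennreal (young_conj A s) * ennreal (s powr (-1 - nprime n)) \<partial>lborel)"

definition Bfun :: "nat \<Rightarrow> (real \<Rightarrow> real) \<Rightarrow> real \<Rightarrow> ereal" where
  "Bfun n A t = (if n = 1 then ereal (A t)
     else (SUP \<tau>\<in>{0..}. ereal (\<tau> * t) - enn2ereal (Efun n A \<tau>)))"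

definition Binv :: "nat \<Rightarrow> (real \<Rightarrow> real) \<Rightarrow> real \<Rightarrow> real" where
  "Binv n A u = Sup {\<tau>. 0 \<le> \<tau> \<and> Bfun n A \<tau> \<le> ereal u}"

definition Jr :: "nat \<Rightarrow> (real \<Rightarrow> real) \<Rightarrow> (real \<Rightarrow> real) \<Rightarrow> real \<Rightarrow> real \<Rightarrow> real" where
  "Jr n A \<phi> r s = (if s = 0 then 0 else s * Binv n A (r * \<phi> s / s ^ n))"

definition Jrinv :: "nat \<Rightarrow> (real \<Rightarrow> real) \<Rightarrow> (real \<Rightarrow> real) \<Rightarrow> real \<Rightarrow> real \<Rightarrow> real" where
  "Jrinv n A \<phi> r t = Sup {s. 0 \<le> s \<and> Jr n A \<phi> r s \<le> t}"

definition psi :: "nat \<Rightarrow> (real \<Rightarrow> real) \<Rightarrow> (real \<Rightarrow> real) \<Rightarrow> real \<Rightarrow> real" where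
  "psi n A \<phi> t = \<phi> (Jrinv n A \<phi> 1 t)"

definition Theta0 :: "(real \<Rightarrow> real) \<Rightarrow> real \<Rightarrow> ereal" where
  "Theta0 h r = Limsup (at_right 0) (\<lambda>t. ereal (h (r * t) / h t))"

definition ThetaInf :: "(real \<Rightarrow> real) \<Rightarrow> real \<Rightarrow> ereal" where
  "ThetaInf h r = Limsup at_top (\<lambda>t. ereal (h (r * t) / h t))"

definition Theta :: "(real \<Rightarrow> real) \<Rightarrow> real \<Rightarrow> ereal" where
  "Theta h r = (SUP t\<in>{0<..}. ereal (h (r * t) / h t))"

definition right_lim :: "(real \<Rightarrow> ereal) \<Rightarrow> real \<Rightarrow> ereal" where
  "right_lim F a = Lim (at_right a) F"

end

theory Submission
  imports Defs
begin

text \<open>If \<rho> > \<Theta>_{B^{-1}}(r), then B^{-1}(r u) \<le> \<rho> B^{-1}(u) for all u (for all large u in the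
  case of \<Theta>^\<infinity>), hence J_r \<le> \<rho> J_1 on (0, \<infinity>) (resp. near 0, where \<phi>(s)/s^n is large).
  Inverting gives J_r^{-1}(t) \<ge> J_1^{-1}(t/\<rho>), so \<phi>(J_r^{-1}(t)) \<ge> \<psi>(t/\<rho>) \<ge> \<psi>(t)/\<Theta>_\<psi>(\<rho>);
  letting \<rho> decrease to \<Theta>_{B^{-1}}(r) gives both bounds.

  Conditions (C1)--(C3) are used only through four properties of B: B(0) \<le> 0, B(t) \<ge> c t^n
  for large t, B(t) = o(t^n) as t \<rightarrow> 0, and B(\<tau>/r) \<le> B(\<tau>)/r for r \<ge> 1. For n \<ge> 2 the two
  growth properties come from bounding the conjugate of A at s above and below by s times the
  measure of a sublevel set of A(\<sigma>)/\<sigma>; this turns the tail integrals defining B into the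
  integrals of (C1) and (C3).\<close>

lemma ereal_less_one_div_imp_less:
  fixes L :: ereal
  assumes "0 \<le> L" "ereal y < 1 / L" "0 < y"
  shows "L < ereal (1 / y)"
  using assms by (cases L) (auto simp: divide_ereal_def field_simps split: if_splits)

lemma ereal_one_div_le_one_div: "0 < x \<Longrightarrow> ereal x \<le> Y \<Longrightarrow> 1 / Y \<le> ereal (1 / x)"
  by (cases Y) (auto simp: divide_ereal_def field_simps)

lemma right_lim_eq_INF:
  fixes F :: "real \<Rightarrow> ereal"
  assumes mono: "\<And>a b. \<rho> < a \<Longrightarrow> a \<le> b \<Longrightarrow> F a \<le> F b"
  shows "right_lim F \<rho> = (INF a\<in>{\<rho><..}. F a)"
proof -
  have "(F \<longlongrightarrow> (INF a\<in>{\<rho><..}. F a)) (at_right \<rho>)"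
  proof (rule order_tendstoI)
    fix y assume "y < (INF a\<in>{\<rho><..}. F a)"
    then show "\<forall>\<^sub>F a in at_right \<rho>. y < F a"
      by (auto intro: eventually_mono[OF eventually_at_right_less] simp: less_INF_D)
  next
    fix y assume "(INF a\<in>{\<rho><..}. F a) < y"
    then obtain a1 where "\<rho> < a1" "F a1 < y" by (auto simp: INF_less_iff)
    then show "\<forall>\<^sub>F a in at_right \<rho>. F a < y"
      unfolding eventually_at_right_field using mono by (intro exI[of _ a1]) (meson le_less_trans less_imp_le)
  qed
  then show ?thesis unfolding right_lim_def by (rule tendsto_Lim[rotated]) simp
qed

lemma one_div_right_lim_le:
  fixes F :: "real \<Rightarrow> ereal"
  assumes mono: "\<And>a b. \<rho> < a \<Longrightarrow> a \<le> b \<Longrightarrow> F a \<le> F b"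
    and nonneg: "\<And>a. \<rho> < a \<Longrightarrow> 0 \<le> F a"
    and bound: "\<And>a. \<rho> < a \<Longrightarrow> 1 / F a \<le> X"
  shows "1 / right_lim F \<rho> \<le> X"
proof -
  have "1 / (INF a\<in>{\<rho><..}. F a) \<le> X"
  proof (rule dense_le)
    fix y assume y: "y < 1 / (INF a\<in>{\<rho><..}. F a)"
    show "y \<le> X"
    proof (cases "y \<le> 0")
      case True
      have "0 \<le> 1 / F (\<rho> + 1)" using nonneg[of "\<rho> + 1"] by (cases "F (\<rho> + 1)") (auto simp: divide_ereal_def)
      then show ?thesis using True bound[of "\<rho> + 1"] by auto
    next
      case False
      then obtain y' where y': "y = ereal y'" "0 < y'" using y by (cases y) auto
      have "0 \<le> (INF a\<in>{\<rho><..}. F a)" using nonneg by (auto intro: INF_greatest)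
      then have "(INF a\<in>{\<rho><..}. F a) < ereal (1 / y')"
        using ereal_less_one_div_imp_less y y' by auto
      then obtain a where a: "\<rho> < a" "F a < ereal (1 / y')" by (auto simp: INF_less_iff)
      have "y < 1 / F a"
        using a nonneg[of a] y' by (cases "F a") (auto simp: divide_ereal_def field_simps split: if_splits)
      then show ?thesis using bound[OF a(1)] by auto
    qed
  qed
  then show ?thesis using right_lim_eq_INF[OF mono] by simp
qed

lemma Theta_mono:
  assumes h: "mono_on {0..} h" "\<And>t. 0 < t \<Longrightarrow> 0 < h t" and "0 \<le> a" "a \<le> b"
  shows "Theta h a \<le> Theta h b"
  unfolding Theta_def
proof (rule SUP_mono)
  fix t :: real assume t: "t \<in> {0<..}"
  have "h (a * t) / h t \<le> h (b * t) / h t"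
    using assms t by (intro divide_right_mono mono_onD[OF h(1)]) (auto intro: mult_right_mono less_imp_le)
  then show "\<exists>t'\<in>{0<..}. ereal (h (a * t) / h t) \<le> ereal (h (b * t') / h t')"
    using t by auto
qed

lemma Theta0_mono:
  assumes h: "mono_on {0..} h" "\<And>t. 0 < t \<Longrightarrow> 0 < h t" and "0 \<le> a" "a \<le> b"
  shows "Theta0 h a \<le> Theta0 h b"
  unfolding Theta0_def
proof (intro Limsup_mono eventually_mono[OF eventually_at_right_less])
  fix t :: real assume "0 < t"
  then have "h (a * t) / h t \<le> h (b * t) / h t"
    using assms by (intro divide_right_mono mono_onD[OF h(1)]) (auto intro: mult_right_mono less_imp_le)
  then show "ereal (h (a * t) / h t) \<le> ereal (h (b * t) / h t)" by simp
qed

lemma Theta_nonneg: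
  assumes "\<And>t. 0 < t \<Longrightarrow> 0 < h t" "0 < a"
  shows "0 \<le> Theta h a"
  unfolding Theta_def using assms by (intro SUP_upper2[of 1]) (auto intro: less_imp_le)

lemma Theta0_nonneg:
  assumes "\<And>t. 0 < t \<Longrightarrow> 0 < h t" "0 < a"
  shows "0 \<le> Theta0 h a"
proof -
  have "0 \<le> Liminf (at_right 0) (\<lambda>t. ereal (h (a * t) / h t))"
    using assms by (intro Liminf_bounded eventually_mono[OF eventually_at_right_less])
      (auto intro: less_imp_le)
  also have "\<dots> \<le> Theta0 h a" unfolding Theta0_def by (intro Liminf_le_Limsup) simp
  finally show ?thesis .
qed

lemma one_div_Theta_le:
  fixes h :: "real \<Rightarrow> real"
  assumes h: "\<And>t. 0 < t \<Longrightarrow> 0 < h t" and "0 < a" "0 < t"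
  shows "1 / Theta h a \<le> ereal (h (t / a) / h t)"
proof -
  have "ereal (h (a * (t / a)) / h (t / a)) \<le> Theta h a"
    unfolding Theta_def using assms by (intro SUP_upper) auto
  then have "1 / Theta h a \<le> ereal (1 / (h t / h (t / a)))"
    using assms by (intro ereal_one_div_le_one_div) auto
  then show ?thesis by simp
qed

lemma one_div_Theta0_le_Liminf:
  fixes h g :: "real \<Rightarrow> real"
  assumes h: "\<And>t. 0 < t \<Longrightarrow> 0 < h t" and a: "0 < a"
    and g: "\<forall>\<^sub>F t in at_right 0. h (t / a) \<le> g t"
  shows "1 / Theta0 h a \<le> Liminf (at_right 0) (\<lambda>t. ereal (g t / h t))"
  unfolding le_Liminf_iff
proof (intro allI impI)
  fix y assume y: "y < 1 / Theta0 h a"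
  have pos: "\<forall>\<^sub>F t in at_right (0::real). 0 < t" by (rule eventually_at_right_less)
  have ratio_pos: "\<forall>\<^sub>F t in at_right 0. 0 < g t / h t"
    using g pos
  proof eventually_elim
    fix t :: real assume "h (t / a) \<le> g t" "0 < t"
    then show "0 < g t / h t" using h[of t] h[of "t / a"] a by simp
  qed
  show "\<forall>\<^sub>F t in at_right 0. y < ereal (g t / h t)"
  proof (cases "y \<le> 0")
    case True
    show ?thesis using ratio_pos
    proof eventually_elim
      fix t assume "0 < g t / h t"
      then show "y < ereal (g t / h t)" using True by (simp add: order.strict_trans1)
    qed
  next
    case False
    then obtain y' where y': "y = ereal y'" "0 < y'" using y by (cases y) auto
    have "Theta0 h a < ereal (1 / y')"
      using ereal_less_one_div_imp_less[OF Theta0_nonneg[OF h a]] y y' by auto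
    then have "\<forall>\<^sub>F x in at_right 0. ereal (h (a * x) / h x) < ereal (1 / y')"
      unfolding Theta0_def by (rule Limsup_lessD)
    then obtain d where d: "0 < d" "\<And>x. 0 < x \<Longrightarrow> x < d \<Longrightarrow> h (a * x) / h x < 1 / y'"
      unfolding eventually_at_right_field by auto
    have "\<forall>\<^sub>F t in at_right 0. y' * h t < h (t / a)"
      unfolding eventually_at_right_field
    proof (intro exI[of _ "a * d"] conjI allI impI)
      fix t :: real assume t: "0 < t" "t < a * d"
      have "h t / h (t / a) < 1 / y'" using d(2)[of "t / a"] t a by (simp add: field_simps)
      then show "y' * h t < h (t / a)" using h[of "t / a"] t a y' by (simp add: field_simps)
    qed (use a d in auto)
    then show ?thesis using g pos
    proof eventually_elim
      fix t :: real assume "y' * h t < h (t / a)" "h (t / a) \<le> g t" "0 < t"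
      then have "y' < g t / h t" using h[of t] by (simp add: field_simps)
      then show "y < ereal (g t / h t)" using y' by simp
    qed
  qed
qed


locale regular_B =
  fixes n :: nat and A :: "real \<Rightarrow> real"
  assumes n_ge_1: "n \<ge> 1"
    and B_0: "Bfun n A 0 \<le> 0"
    and B_ge_power: "\<exists>c>0. \<exists>T. \<forall>t\<ge>T. ereal (c * t ^ n) \<le> Bfun n A t"
    and B_le_power: "\<And>K. 0 < K \<Longrightarrow> \<exists>\<delta>>0. \<forall>t. 0 \<le> t \<and> t \<le> \<delta> \<longrightarrow> Bfun n A t \<le> ereal (t ^ n / K)"
    and B_div: "\<And>r \<tau> u. 1 \<le> r \<Longrightarrow> 0 \<le> \<tau> \<Longrightarrow> Bfun n A \<tau> \<le> ereal (r * u) \<Longrightarrow> Bfun n A (\<tau> / r) \<le> ereal u"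
begin

lemma bdd_above_B_sublevel: "bdd_above {\<tau>. 0 \<le> \<tau> \<and> Bfun n A \<tau> \<le> ereal u}"
proof -
  obtain c T where c: "c > 0" "\<And>t. t \<ge> T \<Longrightarrow> ereal (c * t ^ n) \<le> Bfun n A t"
    using B_ge_power by auto
  have "\<tau> \<le> max T (max 1 (u / c))" if "Bfun n A \<tau> \<le> ereal u" for \<tau>
  proof (rule ccontr)
    assume "\<not> ?thesis"
    then have \<tau>: "\<tau> \<ge> T" "\<tau> > 1" "u / c < \<tau>" by auto
    have "u < c * \<tau>" using \<tau>(3) c(1) by (simp add: pos_divide_less_eq mult.commute)
    have "c * \<tau> \<le> c * \<tau> ^ n"
      using power_increasing[of 1 n \<tau>] \<tau>(2) n_ge_1 c(1) by (simp add: mult_left_mono)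
    then have "ereal u < ereal (c * \<tau> ^ n)" using \<open>u < c * \<tau>\<close> by simp
    also have "\<dots> \<le> Bfun n A \<tau>" using c(2)[OF \<tau>(1)] .
    finally
    show False using that by auto
  qed
  then show ?thesis by (intro bdd_aboveI[where M = "max T (max 1 (u / c))"]) auto
qed

lemma B_0_le: "0 \<le> u \<Longrightarrow> Bfun n A 0 \<le> ereal u"
  using order_trans[OF B_0] by simp

lemma Binv_upper: "0 \<le> \<tau> \<Longrightarrow> Bfun n A \<tau> \<le> ereal u \<Longrightarrow> \<tau> \<le> Binv n A u"
  unfolding Binv_def by (rule cSup_upper) (use bdd_above_B_sublevel in auto)

lemma Binv_least:
  "0 \<le> u \<Longrightarrow> (\<And>\<tau>. 0 \<le> \<tau> \<Longrightarrow> Bfun n A \<tau> \<le> ereal u \<Longrightarrow> \<tau> \<le> M) \<Longrightarrow> Binv n A u \<le> M"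
  unfolding Binv_def by (rule cSup_least) (use B_0_le in \<open>auto intro!: exI[of _ 0]\<close>)

lemma Binv_nonneg: "0 \<le> u \<Longrightarrow> 0 \<le> Binv n A u"
  using Binv_upper[of 0 u] B_0_le by simp

lemma Binv_mono:
  assumes "0 \<le> u" "u \<le> v"
  shows "Binv n A u \<le> Binv n A v"
proof (rule Binv_least[OF assms(1)])
  fix \<tau> assume "0 \<le> \<tau>" "Bfun n A \<tau> \<le> ereal u"
  then show "\<tau> \<le> Binv n A v" using assms(2) by (meson Binv_upper ereal_less_eq(3) order_trans)
qed

lemma Binv_ge_root:
  assumes "0 < K"
  shows "\<exists>\<epsilon>>0. \<forall>u. 0 < u \<and> u \<le> \<epsilon> \<longrightarrow> K * u \<le> Binv n A u ^ n"
proof -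
  obtain \<delta> where \<delta>: "\<delta> > 0" "\<And>t. 0 \<le> t \<Longrightarrow> t \<le> \<delta> \<Longrightarrow> Bfun n A t \<le> ereal (t ^ n / K)"
    using B_le_power[OF assms] by auto
  show ?thesis
  proof (intro exI[of _ "\<delta> ^ n / K"] conjI allI impI)
    fix u assume u: "0 < u \<and> u \<le> \<delta> ^ n / K"
    \<comment> \<open>\<open>\<tau> = (K u)\<^sup>1\<^sup>/\<^sup>n\<close> lies in the sublevel set \<open>{B \<le> u}\<close> because \<open>B(\<tau>) \<le> \<tau>\<^sup>n/K\<close> near \<open>0\<close>\<close>
    define \<tau> where "\<tau> = root n (K * u)"
    have \<tau>n: "\<tau> ^ n = K * u" and \<tau>0: "0 \<le> \<tau>"
      using u assms n_ge_1 by (auto simp: \<tau>_def real_root_pow_pos2)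
    have "K * u \<le> \<delta> ^ n" using u assms by (simp add: field_simps)
    then have "root n (K * u) \<le> root n (\<delta> ^ n)" using n_ge_1 by simp
    then have "\<tau> \<le> \<delta>" unfolding \<tau>_def using n_ge_1 \<delta>(1) by (simp add: real_root_power_cancel)
    then have "Bfun n A \<tau> \<le> ereal u" using \<delta>(2)[OF \<tau>0] \<tau>n assms by simp
    then have "\<tau> \<le> Binv n A u" by (rule Binv_upper[OF \<tau>0])
    from power_mono[OF this \<tau>0, of n] show "K * u \<le> Binv n A u ^ n" using \<tau>n by simp
  qed (use \<delta> assms in auto)
qed

lemma Binv_pos:
  assumes "0 < u"
  shows "0 < Binv n A u"
proof -
  obtain \<epsilon> where \<epsilon>: "0 < \<epsilon>" "\<And>v. 0 < v \<Longrightarrow> v \<le> \<epsilon> \<Longrightarrow> 1 * v \<le> Binv n A v ^ n"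
    using Binv_ge_root[of 1] by auto
  have "0 < Binv n A (min u \<epsilon>) ^ n" using \<epsilon> assms by (intro less_le_trans[OF _ \<epsilon>(2)]) auto
  then have "0 < Binv n A (min u \<epsilon>)" using Binv_nonneg[of "min u \<epsilon>"] \<epsilon>(1) assms n_ge_1
    by (cases "Binv n A (min u \<epsilon>) = 0") (auto simp: power_0_left)
  also have "\<dots> \<le> Binv n A u" using \<epsilon>(1) assms by (intro Binv_mono) auto
  finally show ?thesis .
qed

lemma Binv_le_root: "\<exists>c>0. \<exists>T\<ge>0. \<forall>u\<ge>0. Binv n A u \<le> max T (root n (u / c))"
proof -
  obtain c T where c: "c > 0" "\<And>t. t \<ge> T \<Longrightarrow> ereal (c * t ^ n) \<le> Bfun n A t"
    using B_ge_power by auto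
  have "Binv n A u \<le> max (max T 0) (root n (u / c))" if "u \<ge> 0" for u
  proof (rule Binv_least[OF that])
    fix \<tau> assume \<tau>: "0 \<le> \<tau>" "Bfun n A \<tau> \<le> ereal u"
    show "\<tau> \<le> max (max T 0) (root n (u / c))"
    proof (cases "\<tau> \<ge> T")
      case True
      then have "c * \<tau> ^ n \<le> u" using c(2) \<tau>(2) by (meson ereal_less_eq(3) order_trans)
      then have "root n (\<tau> ^ n) \<le> root n (u / c)" using c(1) n_ge_1 by (simp add: field_simps real_root_le_iff)
      then show ?thesis using \<tau>(1) n_ge_1 by (simp add: real_root_power_cancel)
    qed auto
  qed
  then show ?thesis using c(1) by (intro exI[of _ c] conjI exI[of _ "max T 0"]) auto
qed

lemma Binv_mult_le:
  assumes "1 \<le> r" "0 < u"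
  shows "Binv n A (r * u) \<le> r * Binv n A u"
proof (rule Binv_least)
  fix \<tau> assume \<tau>: "0 \<le> \<tau>" "Bfun n A \<tau> \<le> ereal (r * u)"
  have "\<tau> / r \<le> Binv n A u" using B_div[OF assms(1) \<tau>] \<tau>(1) assms by (intro Binv_upper) auto
  then show "\<tau> \<le> r * Binv n A u" using assms by (simp add: field_simps)
qed (use assms in auto)

lemma Binv_ratio_bounds:
  assumes "0 < r" "0 < u"
  shows "0 \<le> Binv n A (r * u) / Binv n A u" "Binv n A (r * u) / Binv n A u \<le> max 1 r"
proof -
  have "Binv n A (r * u) \<le> max 1 r * Binv n A u"
  proof (cases "r \<le> 1")
    case True
    then have "Binv n A (r * u) \<le> Binv n A u" using assms by (intro Binv_mono) (auto simp: mult_le_cancel_right1)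
    then show ?thesis using True by auto
  qed (use Binv_mult_le[of r u] assms in auto)
  then show "Binv n A (r * u) / Binv n A u \<le> max 1 r" using Binv_pos[OF assms(2)] by (simp add: field_simps)
  show "0 \<le> Binv n A (r * u) / Binv n A u" using Binv_pos[OF assms(2)] Binv_nonneg[of "r * u"] assms by auto
qed

lemma Theta_Binv_real:
  assumes "0 < r"
  shows "ereal (real_of_ereal (Theta (Binv n A) r)) = Theta (Binv n A) r"
    and "0 \<le> real_of_ereal (Theta (Binv n A) r)"
proof -
  have "0 \<le> Theta (Binv n A) r"
    unfolding Theta_def using Binv_ratio_bounds(1)[OF assms, of 1] by (intro SUP_upper2[of 1]) auto
  moreover have "Theta (Binv n A) r \<le> ereal (max 1 r)"
    unfolding Theta_def using Binv_ratio_bounds(2)[OF assms] by (intro SUP_least) (simp del: ereal_max)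
  ultimately show "ereal (real_of_ereal (Theta (Binv n A) r)) = Theta (Binv n A) r"
    "0 \<le> real_of_ereal (Theta (Binv n A) r)"
    by (cases "Theta (Binv n A) r"; simp del: ereal_max)+
qed

lemma ThetaInf_Binv_real:
  assumes "0 < r"
  shows "ereal (real_of_ereal (ThetaInf (Binv n A) r)) = ThetaInf (Binv n A) r"
    and "0 \<le> real_of_ereal (ThetaInf (Binv n A) r)"
proof -
  let ?R = "\<lambda>u. ereal (Binv n A (r * u) / Binv n A u)"
  have ev: "\<forall>\<^sub>F u in at_top. 0 \<le> ?R u \<and> ?R u \<le> ereal (max 1 r)"
    using Binv_ratio_bounds[OF assms]
    by (intro eventually_mono[OF eventually_gt_at_top[of 0]]) (simp del: ereal_max)
  have "0 \<le> Liminf at_top ?R" using ev by (intro Liminf_bounded) (auto elim: eventually_mono)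
  also have "\<dots> \<le> ThetaInf (Binv n A) r" unfolding ThetaInf_def by (intro Liminf_le_Limsup) simp
  finally have "0 \<le> ThetaInf (Binv n A) r" .
  moreover have "ThetaInf (Binv n A) r \<le> ereal (max 1 r)"
    unfolding ThetaInf_def using ev by (intro Limsup_bounded) (auto elim: eventually_mono)
  ultimately show "ereal (real_of_ereal (ThetaInf (Binv n A) r)) = ThetaInf (Binv n A) r"
    "0 \<le> real_of_ereal (ThetaInf (Binv n A) r)"
    by (cases "ThetaInf (Binv n A) r"; simp del: ereal_max)+
qed

end

locale regular_B_gauge = regular_B +
  fixes \<phi> :: "real \<Rightarrow> real"
  assumes gauge: "gauge n \<phi>"
begin

lemma phi_mono: "0 \<le> a \<Longrightarrow> a \<le> b \<Longrightarrow> \<phi> a \<le> \<phi> b"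
  using gauge unfolding gauge_def mono_on_def by auto

lemma phi_pos: "0 < a \<Longrightarrow> 0 < \<phi> a"
  using gauge unfolding gauge_def by auto

lemma phi_nonneg: "0 \<le> a \<Longrightarrow> 0 \<le> \<phi> a"
  using phi_pos[of a] gauge unfolding gauge_def by (cases "a = 0") (auto simp: less_le)

lemma phi_div_power_antimono: "0 < a \<Longrightarrow> a \<le> b \<Longrightarrow> \<phi> b / b ^ n \<le> \<phi> a / a ^ n"
  using gauge unfolding gauge_def by auto

lemma Jr_eq: "0 < s \<Longrightarrow> Jr n A \<phi> r s = s * Binv n A (r * (\<phi> s / s ^ n))"
  by (simp add: Jr_def)

lemma Jr_gt_eventually:
  assumes "0 < r" "0 < t"
  shows "\<exists>S\<ge>1. \<forall>s\<ge>S. t < Jr n A \<phi> r s"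
proof -
  define K where "K = (t ^ n + 1) / (r * \<phi> 1)"
  have K: "0 < K" "K * r * \<phi> 1 = t ^ n + 1"
    using phi_pos[of 1] assms by (auto simp: K_def intro!: divide_pos_pos add_nonneg_pos)
  obtain \<epsilon> where \<epsilon>: "\<epsilon> > 0" "\<And>u. 0 < u \<Longrightarrow> u \<le> \<epsilon> \<Longrightarrow> K * u \<le> Binv n A u ^ n"
    using Binv_ge_root[OF K(1)] by auto
  define S where "S = max 1 (t / Binv n A \<epsilon> + 1)"
  have "t < Jr n A \<phi> r s" if sS: "S \<le> s" for s
  proof -
    have s: "1 \<le> s" "0 < s" using sS by (auto simp: S_def)
    define v where "v = r * (\<phi> s / s ^ n)"
    have v0: "0 < v" using s assms phi_pos by (simp add: v_def)
    show ?thesis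
    proof (cases "v \<le> \<epsilon>")
      case True
      \<comment> \<open>for small \<open>v\<close>, \<open>(s B\<^sup>-\<^sup>1(v))\<^sup>n \<ge> K s\<^sup>n v = K r \<phi>(s) \<ge> K r \<phi>(1) > t\<^sup>n\<close>\<close>
      have "s ^ n * (K * v) \<le> s ^ n * Binv n A v ^ n" using \<epsilon>(2)[OF v0 True] s by simp
      moreover have "s ^ n * (K * v) = K * r * \<phi> s" using s by (simp add: v_def field_simps)
      moreover have "K * r * \<phi> 1 \<le> K * r * \<phi> s" using phi_mono[of 1 s] s K assms by (intro mult_left_mono) auto
      ultimately have "t ^ n < (s * Binv n A v) ^ n" using K by (simp add: power_mult_distrib)
      then have "t < s * Binv n A v"
        using s Binv_nonneg[of v] v0 by (meson power_less_imp_less_base mult_nonneg_nonneg less_imp_le)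
      then show ?thesis using Jr_eq[OF s(2)] by (simp add: v_def)
    next
      case False
      then have "s * Binv n A \<epsilon> \<le> s * Binv n A v" using \<epsilon> s by (intro mult_left_mono Binv_mono) auto
      moreover have "t < s * Binv n A \<epsilon>" using sS Binv_pos[OF \<epsilon>(1)] by (simp add: S_def field_simps)
      ultimately show ?thesis using Jr_eq[OF s(2)] by (simp add: v_def)
    qed
  qed
  then show ?thesis by (intro exI[of _ S]) (auto simp: S_def)
qed

lemma Jr_ge_away_from_0:
  assumes "0 < r" "0 < \<delta>"
  shows "\<exists>m>0. \<forall>s\<ge>\<delta>. m < Jr n A \<phi> r s"
proof -
  obtain S where S: "S \<ge> 1" "\<And>s. s \<ge> S \<Longrightarrow> 1 < Jr n A \<phi> r s"
    using Jr_gt_eventually[OF assms(1), of 1] by auto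
  define v where "v = r * (\<phi> S / S ^ n)"
  have v: "0 < v" using S phi_pos assms by (simp add: v_def)
  define m where "m = min 1 (\<delta> * Binv n A v) / 2"
  have "m < Jr n A \<phi> r s" if s: "\<delta> \<le> s" for s
  proof (cases "S \<le> s")
    case False
    have s0: "0 < s" using s assms by auto
    \<comment> \<open>on \<open>[\<delta>, S]\<close> the argument of \<open>B\<^sup>-\<^sup>1\<close> is at least its value at \<open>S\<close>\<close>
    have "v \<le> r * (\<phi> s / s ^ n)"
      unfolding v_def using assms False phi_div_power_antimono[OF s0, of S] by (intro mult_left_mono) auto
    then have "\<delta> * Binv n A v \<le> s * Binv n A (r * (\<phi> s / s ^ n))"
      using s assms Binv_nonneg[of v] v by (intro mult_mono Binv_mono) auto
    moreover have "m < \<delta> * Binv n A v"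
      using mult_pos_pos[OF assms(2) Binv_pos[OF v]] min.cobounded2[of 1 "\<delta> * Binv n A v"]
      unfolding m_def by linarith
    ultimately show ?thesis using Jr_eq[OF s0, of r] by simp
  qed (use S(2) in \<open>force simp: m_def\<close>)
  moreover have "0 < m" using Binv_pos[OF v] assms by (simp add: m_def)
  ultimately show ?thesis by blast
qed

lemma bdd_above_Jr_sublevel:
  assumes "0 < r"
  shows "bdd_above {s. 0 \<le> s \<and> Jr n A \<phi> r s \<le> t}"
proof -
  have "0 < max t 1" by simp
  then obtain S where S: "\<And>s. s \<ge> S \<Longrightarrow> max t 1 < Jr n A \<phi> r s"
    using Jr_gt_eventually[OF assms] by blast
  have "s \<le> S" if "Jr n A \<phi> r s \<le> t" for s using S[of s] that by force
  then show ?thesis by (intro bdd_aboveI[where M = S]) auto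
qed

lemma Jrinv_upper: "0 < r \<Longrightarrow> 0 \<le> s \<Longrightarrow> Jr n A \<phi> r s \<le> t \<Longrightarrow> s \<le> Jrinv n A \<phi> r t"
  unfolding Jrinv_def by (rule cSup_upper) (use bdd_above_Jr_sublevel in auto)

lemma Jrinv_least:
  "0 \<le> t \<Longrightarrow> (\<And>s. 0 \<le> s \<Longrightarrow> Jr n A \<phi> r s \<le> t \<Longrightarrow> s \<le> M) \<Longrightarrow> Jrinv n A \<phi> r t \<le> M"
  unfolding Jrinv_def by (rule cSup_least) (auto simp: Jr_def intro!: exI[of _ 0])

lemma Jrinv_nonneg: "0 < r \<Longrightarrow> 0 \<le> t \<Longrightarrow> 0 \<le> Jrinv n A \<phi> r t"
  using Jrinv_upper[of r 0 t] by (simp add: Jr_def)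

lemma Jrinv_mono: "0 < r \<Longrightarrow> 0 \<le> t \<Longrightarrow> t \<le> t' \<Longrightarrow> Jrinv n A \<phi> r t \<le> Jrinv n A \<phi> r t'"
  by (intro Jrinv_least Jrinv_upper) auto

lemma Jrinv_pos:
  assumes "0 < r" "0 < t"
  shows "0 < Jrinv n A \<phi> r t"
proof -
  obtain c T where cT: "c > 0" "T \<ge> 0" "\<And>u. u \<ge> 0 \<Longrightarrow> Binv n A u \<le> max T (root n (u / c))"
    using Binv_le_root by auto
  \<comment> \<open>by continuity of \<open>\<phi>\<close> at \<open>0\<close> choose \<open>s\<close> so small that \<open>r \<phi>(s)/c \<le> t\<^sup>n\<close> and \<open>s T \<le> t\<close>\<close>
  have "0 < c * t ^ n / r" using cT assms by simp
  then obtain d where d: "d > 0" "\<And>x. x \<in> {0..} \<Longrightarrow> dist x 0 < d \<Longrightarrow> dist (\<phi> x) (\<phi> 0) < c * t ^ n / r"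
    using gauge unfolding gauge_def continuous_on_iff by (meson atLeast_iff order_refl)
  define s where "s = min (d / 2) (t / (T + 1))"
  have s0: "0 < s" using d assms cT by (simp add: s_def)
  have "\<phi> s < c * t ^ n / r"
    using d(2)[of s] s0 d(1) gauge phi_nonneg[of s] by (auto simp: s_def dist_real_def gauge_def)
  then have "r * \<phi> s / c \<le> t ^ n" using assms cT by (simp add: field_simps)
  then have "root n (r * \<phi> s / c) \<le> root n (t ^ n)" using n_ge_1 by simp
  then have "root n (r * \<phi> s / c) \<le> t" using assms n_ge_1 by (simp add: real_root_power_cancel)
  moreover have "s * root n (r * (\<phi> s / s ^ n) / c) = root n (r * \<phi> s / c)"
  proof -
    have "s * root n (r * (\<phi> s / s ^ n) / c) = root n (s ^ n) * root n (r * (\<phi> s / s ^ n) / c)"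
      using s0 n_ge_1 by (simp add: real_root_power_cancel)
    also have "\<dots> = root n (s ^ n * (r * (\<phi> s / s ^ n) / c))" by (rule real_root_mult[symmetric])
    finally show ?thesis using s0 by simp
  qed
  moreover have "s * T \<le> t"
  proof -
    have "s * T \<le> t / (T + 1) * T" using cT by (intro mult_right_mono) (auto simp: s_def)
    also have "\<dots> \<le> t" using cT assms by (simp add: field_simps)
    finally show ?thesis .
  qed
  moreover have "Jr n A \<phi> r s \<le> s * max T (root n (r * (\<phi> s / s ^ n) / c))"
    using Jr_eq[OF s0] cT(3)[of "r * (\<phi> s / s ^ n)"] phi_nonneg[of s] s0 assms by (simp add: mult_left_mono)
  ultimately have "Jr n A \<phi> r s \<le> t" using s0 by (simp add: max_mult_distrib_left)
  then show ?thesis using Jrinv_upper[OF assms(1)] s0 by (meson less_le_trans less_imp_le)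
qed

lemma Jrinv_small:
  assumes "0 < r" "0 < \<delta>"
  shows "\<exists>m>0. \<forall>t. 0 \<le> t \<and> t < m \<longrightarrow> Jrinv n A \<phi> r t \<le> \<delta>"
proof -
  obtain m where m: "m > 0" "\<And>s. s \<ge> \<delta> \<Longrightarrow> m < Jr n A \<phi> r s" using Jr_ge_away_from_0[OF assms] by auto
  have "Jrinv n A \<phi> r t \<le> \<delta>" if t: "0 \<le> t" "t < m" for t
  proof (rule Jrinv_least[OF t(1)])
    fix s assume "Jr n A \<phi> r s \<le> t"
    then show "s \<le> \<delta>" using m(2)[of s] t(2) by fastforce
  qed
  then show ?thesis using m(1) by blast
qed

lemma psi_pos: "0 < t \<Longrightarrow> 0 < psi n A \<phi> t"
  unfolding psi_def using Jrinv_pos[of 1 t] phi_pos by auto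

lemma psi_mono_on: "mono_on {0..} (psi n A \<phi>)"
  unfolding psi_def by (intro mono_onI phi_mono Jrinv_mono Jrinv_nonneg) auto

text \<open>A pointwise comparison \<open>J\<^sub>r \<le> \<rho> J\<^sub>1\<close> below a threshold \<open>\<delta>\<close> inverts to
  \<open>J\<^sub>1\<^sup>-\<^sup>1(t/\<rho>) \<le> J\<^sub>r\<^sup>-\<^sup>1(t)\<close>, provided the left side is below the threshold.\<close>

lemma psi_div_le_phi_Jrinv:
  assumes r: "0 < r" and \<rho>: "0 < \<rho>" and t: "0 < t"
    and ratio: "\<And>s. 0 < s \<Longrightarrow> s < \<delta> \<Longrightarrow> Binv n A (r * (\<phi> s / s ^ n)) \<le> \<rho> * Binv n A (\<phi> s / s ^ n)"
    and small: "Jrinv n A \<phi> 1 (t / \<rho>) < \<delta>"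
  shows "psi n A \<phi> (t / \<rho>) \<le> \<phi> (Jrinv n A \<phi> r t)"
proof -
  have "Jrinv n A \<phi> 1 (t / \<rho>) \<le> Jrinv n A \<phi> r t"
  proof (rule Jrinv_least)
    fix s assume s: "0 \<le> s" "Jr n A \<phi> 1 s \<le> t / \<rho>"
    show "s \<le> Jrinv n A \<phi> r t"
    proof (cases "s = 0")
      case False
      have "s < \<delta>" using Jrinv_upper[of 1 s] s small by fastforce
      then have "Jr n A \<phi> r s \<le> \<rho> * Jr n A \<phi> 1 s"
        using ratio[of s] False s Jr_eq[of s] by (simp add: mult_left_mono mult.left_commute[of \<rho>])
      also have "\<dots> \<le> t" using s(2) \<rho> by (simp add: field_simps)
      finally show ?thesis using Jrinv_upper[OF r s(1)] by auto
    qed (use Jrinv_nonneg r t in auto)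
  qed (use \<rho> t in auto)
  then show ?thesis
    unfolding psi_def using Jrinv_nonneg[of 1 "t / \<rho>"] t \<rho> by (intro phi_mono) auto
qed

lemma INF_ratio_ge:
  assumes r: "0 < r"
  shows "(INF t\<in>{0<..}. ereal (\<phi> (Jrinv n A \<phi> r t) / psi n A \<phi> t))
       \<ge> 1 / right_lim (Theta (psi n A \<phi>)) (real_of_ereal (Theta (Binv n A) r))"
proof (rule one_div_right_lim_le)
  let ?\<rho> = "real_of_ereal (Theta (Binv n A) r)"
  fix a assume a: "?\<rho> < a"
  have a0: "0 < a" using a Theta_Binv_real(2)[OF r] by linarith
  show "0 \<le> Theta (psi n A \<phi>) a" by (rule Theta_nonneg[OF psi_pos a0])
  show "1 / Theta (psi n A \<phi>) a \<le> (INF t\<in>{0<..}. ereal (\<phi> (Jrinv n A \<phi> r t) / psi n A \<phi> t))"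
  proof (rule INF_greatest)
    fix t :: real assume "t \<in> {0<..}"
    then have t: "0 < t" by simp
    have ratio: "Binv n A (r * v) \<le> a * Binv n A v" if "0 < v" for v
    proof -
      have "ereal (Binv n A (r * v) / Binv n A v) \<le> Theta (Binv n A) r"
        unfolding Theta_def using that by (intro SUP_upper) auto
      then have "ereal (Binv n A (r * v) / Binv n A v) \<le> ereal ?\<rho>" by (subst Theta_Binv_real(1)[OF r])
      then have "Binv n A (r * v) \<le> ?\<rho> * Binv n A v" using Binv_pos[OF that] by (simp add: field_simps)
      also have "\<dots> \<le> a * Binv n A v" using a Binv_pos[OF that] by (intro mult_right_mono) auto
      finally show ?thesis .
    qed
    have "Binv n A (r * (\<phi> s / s ^ n)) \<le> a * Binv n A (\<phi> s / s ^ n)" if "0 < s" for s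
      using phi_pos[OF that] that by (intro ratio) simp
    then have "psi n A \<phi> (t / a) \<le> \<phi> (Jrinv n A \<phi> r t)"
      by (intro psi_div_le_phi_Jrinv[OF r a0 t, where \<delta> = "Jrinv n A \<phi> 1 (t / a) + 1"]) auto
    then have "psi n A \<phi> (t / a) / psi n A \<phi> t \<le> \<phi> (Jrinv n A \<phi> r t) / psi n A \<phi> t"
      using psi_pos[OF t] by (intro divide_right_mono) auto
    then show "1 / Theta (psi n A \<phi>) a \<le> ereal (\<phi> (Jrinv n A \<phi> r t) / psi n A \<phi> t)"
      using one_div_Theta_le[OF psi_pos a0 t] by (meson ereal_less_eq(3) order_trans)
  qed
qed (use Theta_Binv_real[OF r] in \<open>auto intro: Theta_mono psi_mono_on psi_pos\<close>)

lemma Liminf_ratio_ge: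
  assumes r: "0 < r" and lim: "filterlim (\<lambda>s. \<phi> s / s ^ n) at_top (at_right 0)"
  shows "Liminf (at_right 0) (\<lambda>t. ereal (\<phi> (Jrinv n A \<phi> r t) / psi n A \<phi> t))
       \<ge> 1 / right_lim (Theta0 (psi n A \<phi>)) (real_of_ereal (ThetaInf (Binv n A) r))"
proof (rule one_div_right_lim_le)
  let ?\<rho> = "real_of_ereal (ThetaInf (Binv n A) r)"
  fix a assume a: "?\<rho> < a"
  have a0: "0 < a" using a ThetaInf_Binv_real(2)[OF r] by linarith
  show "0 \<le> Theta0 (psi n A \<phi>) a" by (rule Theta0_nonneg[OF psi_pos a0])
  have "ThetaInf (Binv n A) r < ereal a" using a by (subst ThetaInf_Binv_real(1)[OF r, symmetric]) simp
  then have "\<forall>\<^sub>F u in at_top. ereal (Binv n A (r * u) / Binv n A u) < ereal a"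
    unfolding ThetaInf_def by (rule Limsup_lessD)
  then obtain U where U: "\<And>u. u \<ge> U \<Longrightarrow> Binv n A (r * u) / Binv n A u < a"
    unfolding eventually_at_top_linorder by auto
  \<comment> \<open>near \<open>0\<close>, \<open>\<phi>(s)/s\<^sup>n\<close> lies in the range where the ratio bound holds\<close>
  have "\<forall>\<^sub>F s in at_right 0. max U 1 \<le> \<phi> s / s ^ n"
    using lim unfolding filterlim_at_top by blast
  then obtain \<delta> where \<delta>: "\<delta> > 0" "\<And>s. 0 < s \<Longrightarrow> s < \<delta> \<Longrightarrow> max U 1 \<le> \<phi> s / s ^ n"
    unfolding eventually_at_right_field by auto
  have ratio: "Binv n A (r * (\<phi> s / s ^ n)) \<le> a * Binv n A (\<phi> s / s ^ n)" if "0 < s" "s < \<delta>" for s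
    using U[of "\<phi> s / s ^ n"] \<delta>(2)[OF that] Binv_pos[of "\<phi> s / s ^ n"] by (simp add: field_simps)
  obtain m where m: "m > 0" "\<And>t. 0 \<le> t \<Longrightarrow> t < m \<Longrightarrow> Jrinv n A \<phi> 1 t \<le> \<delta> / 2"
    using Jrinv_small[of 1 "\<delta> / 2"] \<delta>(1) by auto
  have "\<forall>\<^sub>F t in at_right 0. psi n A \<phi> (t / a) \<le> \<phi> (Jrinv n A \<phi> r t)"
    unfolding eventually_at_right_field
  proof (intro exI[of _ "a * m"] conjI allI impI)
    fix t :: real assume t: "0 < t" "t < a * m"
    have "Jrinv n A \<phi> 1 (t / a) < \<delta>" using m(2)[of "t / a"] t a0 \<delta>(1) by (simp add: field_simps)
    then show "psi n A \<phi> (t / a) \<le> \<phi> (Jrinv n A \<phi> r t)"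
      using ratio by (intro psi_div_le_phi_Jrinv[OF r a0 t(1)])
  qed (use a0 m in auto)
  from one_div_Theta0_le_Liminf[OF psi_pos a0 this]
  show "1 / Theta0 (psi n A \<phi>) a \<le> Liminf (at_right 0) (\<lambda>t. ereal (\<phi> (Jrinv n A \<phi> r t) / psi n A \<phi> t))" .
qed (use ThetaInf_Binv_real[OF r] in \<open>auto intro: Theta0_mono psi_mono_on psi_pos\<close>)

end

lemma young_scale_le:
  assumes "young_finite A" "0 \<le> l" "l \<le> 1" "0 \<le> y"
  shows "A (l * y) \<le> l * A y"
proof -
  have "convex_on {0..} A" "A 0 = 0" using assms(1) unfolding young_finite_def by auto
  then show ?thesis using convex_onD[of "{0..}" A l 0 y] assms by simp
qed

lemma regular_B_dim_1:
  assumes young: "young_finite A" and C2: "C2 A" and C3: "C3 1 A"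
  shows "regular_B 1 A"
proof
  have B: "Bfun m A t = ereal (A t)" if "m = 1" for m t using that by (simp add: Bfun_def)
  show "Bfun 1 A 0 \<le> 0" using young by (simp add: B young_finite_def)
  \<comment> \<open>convexity: \<open>A(1) \<le> A(t)/t\<close> for \<open>t \<ge> 1\<close>\<close>
  have "ereal (A 1 * t ^ 1) \<le> Bfun 1 A t" if "1 \<le> t" for t
    using young_scale_le[OF young, of "1 / t" t] that by (simp add: B field_simps)
  moreover have "0 < A 1" using C2 unfolding C2_def by simp
  ultimately show "\<exists>c>0. \<exists>T. \<forall>t\<ge>T. ereal (c * t ^ 1) \<le> Bfun 1 A t" by blast
  show "\<exists>\<delta>>0. \<forall>t. 0 \<le> t \<and> t \<le> \<delta> \<longrightarrow> Bfun 1 A t \<le> ereal (t ^ 1 / K)" if K: "0 < K" for K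
  proof -
    have "\<forall>\<^sub>F t in at_right 0. K \<le> t / A t" using C3 unfolding C3_def filterlim_at_top by simp
    then obtain d where d: "d > 0" "\<And>t. 0 < t \<Longrightarrow> t < d \<Longrightarrow> K \<le> t / A t"
      unfolding eventually_at_right_field by auto
    have "A t \<le> t / K" if "0 \<le> t" "t \<le> d / 2" for t
    proof (cases "t = 0")
      case False
      then have "K \<le> t / A t" "0 < A t" using d that C2 unfolding C2_def by auto
      then show ?thesis using K by (simp add: field_simps)
    qed (use young in \<open>simp add: young_finite_def\<close>)
    then show ?thesis using d(1) by (intro exI[of _ "d / 2"]) (auto simp: B)
  qed
  show "Bfun 1 A (\<tau> / r) \<le> ereal u" if "1 \<le> r" "0 \<le> \<tau>" "Bfun 1 A \<tau> \<le> ereal (r * u)" for r \<tau> u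
  proof -
    have "A ((1 / r) * \<tau>) \<le> (1 / r) * A \<tau>" using young_scale_le[OF young, of "1 / r" \<tau>] that by simp
    also have "\<dots> \<le> u" using that by (simp add: B divide_le_eq mult.commute)
    finally show ?thesis by (simp add: B)
  qed
qed simp

definition secant :: "(real \<Rightarrow> real) \<Rightarrow> real \<Rightarrow> real" where
  "secant A s = (if s \<le> 0 then 0 else A s / s)"

lemma secant_mono: assumes "young_finite A" "C2 A" shows "mono (secant A)"
proof (rule monoI)
  fix x y :: real assume xy: "x \<le> y"
  show "secant A x \<le> secant A y"
  proof (cases "0 < x")
    case True
    then have "A ((x / y) * y) \<le> (x / y) * A y" using xy by (intro young_scale_le[OF assms(1)]) auto
    then show ?thesis using True xy by (simp add: secant_def field_simps)
  qed (use assms(2) in \<open>auto simp: secant_def C2_def intro: less_imp_le\<close>)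
qed

lemma borel_measurable_secant [measurable]:
  "young_finite A \<Longrightarrow> C2 A \<Longrightarrow> secant A \<in> borel_measurable borel"
  by (rule borel_measurable_mono[OF secant_mono])

lemma secant_pos: "C2 A \<Longrightarrow> 0 < s \<Longrightarrow> 0 < secant A s"
  unfolding secant_def C2_def by auto

lemma nn_integral_threshold_powr:
  fixes h :: "real \<Rightarrow> real" and S :: "real set"
  assumes [measurable]: "h \<in> borel_measurable borel" "S \<in> sets borel"
    and h: "\<And>x. x \<in> S \<Longrightarrow> 0 < h x" and e: "e < -1"
  shows "(\<integral>\<^sup>+ s. (\<integral>\<^sup>+ x. (if x \<in> S \<and> h x \<le> s then ennreal (s powr e) else 0) \<partial>lborel) \<partial>lborel)
       = (\<integral>\<^sup>+ x. indicator S x * ennreal (- (h x powr (e + 1)) / (e + 1)) \<partial>lborel)"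
proof -
  have "(\<integral>\<^sup>+ s. (\<integral>\<^sup>+ x. (if x \<in> S \<and> h x \<le> s then ennreal (s powr e) else 0) \<partial>lborel) \<partial>lborel)
      = (\<integral>\<^sup>+ x. (\<integral>\<^sup>+ s. (if x \<in> S \<and> h x \<le> s then ennreal (s powr e) else 0) \<partial>lborel) \<partial>lborel)"
    by (rule lborel_pair.Fubini') measurable
  also have "\<dots> = (\<integral>\<^sup>+ x. indicator S x * ennreal (- (h x powr (e + 1)) / (e + 1)) \<partial>lborel)"
  proof (rule nn_integral_cong)
    fix x :: real
    show "(\<integral>\<^sup>+ s. (if x \<in> S \<and> h x \<le> s then ennreal (s powr e) else 0) \<partial>lborel)
        = indicator S x * ennreal (- (h x powr (e + 1)) / (e + 1))"
    proof (cases "x \<in> S")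
      case True
      have "(\<integral>\<^sup>+ s. (if x \<in> S \<and> h x \<le> s then ennreal (s powr e) else 0) \<partial>lborel)
          = (\<integral>\<^sup>+ s. ennreal (s powr e) * indicator {h x..} s \<partial>lborel)"
        using True by (intro nn_integral_cong) (auto simp: indicator_def)
      also have "\<dots> = ennreal (- (h x powr (e + 1)) / (e + 1))"
        using e h[OF True] by (intro nn_integral_has_integral_lebesgue' has_integral_powr_to_inf) auto
      finally show ?thesis using True by simp
    qed simp
  qed
  finally show ?thesis .
qed

text \<open>Two-sided control of the conjugate by sublevel sets of the secant slope: a point
  \<open>\<tau>\<close> with \<open>\<tau> s - A(\<tau>) > 0\<close> has \<open>A(\<tau>)/\<tau> < s\<close>, and so has all of \<open>(0,\<tau>]\<close>.\<close>

lemma young_conj_le_measure: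
  assumes young: "young_finite A" and C2: "C2 A" and s: "0 \<le> s"
  shows "e2ennreal (young_conj A s) \<le> ennreal s * emeasure lborel {\<sigma>. 0 < \<sigma> \<and> secant A \<sigma> < s}"
proof -
  define U where "U = {\<sigma>. 0 < \<sigma> \<and> secant A \<sigma> < s}"
  have U[measurable]: "U \<in> sets lborel" unfolding U_def using young C2 by measurable
  have A: "A 0 = 0" "\<And>t. t \<ge> 0 \<Longrightarrow> A t \<ge> 0" using young unfolding young_finite_def by auto
  have "ereal (\<tau> * s - A \<tau>) \<le> enn2ereal (ennreal s * emeasure lborel U)" if \<tau>: "0 \<le> \<tau>" for \<tau>
  proof (cases "\<tau> * s - A \<tau> \<le> 0")
    case False
    then have \<tau>0: "0 < \<tau>" using \<tau> A by (cases "\<tau> = 0") auto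
    then have "secant A \<tau> < s" using False by (simp add: secant_def field_simps)
    have "{0<..\<tau>} \<subseteq> U"
    proof
      fix \<sigma> assume \<sigma>: "\<sigma> \<in> {0<..\<tau>}"
      then have "secant A \<sigma> \<le> secant A \<tau>" by (intro monoD[OF secant_mono[OF young C2]]) simp
      then have "secant A \<sigma> < s" using \<open>secant A \<tau> < s\<close> by (rule order.strict_trans1)
      then show "\<sigma> \<in> U" using \<sigma> unfolding U_def by simp
    qed
    then have "emeasure lborel {0<..\<tau>} \<le> emeasure lborel U" by (intro emeasure_mono U)
    then have "ennreal s * ennreal \<tau> \<le> ennreal s * emeasure lborel U" using \<tau>0 by (intro mult_left_mono) auto
    then have "enn2ereal (ennreal (s * \<tau>)) \<le> enn2ereal (ennreal s * emeasure lborel U)"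
      using s \<tau> by (simp add: ennreal_mult less_eq_ennreal.rep_eq[symmetric])
    moreover have "ereal (\<tau> * s - A \<tau>) \<le> enn2ereal (ennreal (s * \<tau>))" using s \<tau> A(2)[OF \<tau>] by (simp add: mult.commute)
    ultimately show ?thesis by (rule order_trans[rotated])
  next
    case True
    then have "ereal (\<tau> * s - A \<tau>) \<le> 0" by simp
    then show ?thesis using enn2ereal_nonneg by (rule order_trans)
  qed
  then have "young_conj A s \<le> enn2ereal (ennreal s * emeasure lborel U)"
    unfolding young_conj_def by (intro SUP_least) auto
  then have "e2ennreal (young_conj A s) \<le> e2ennreal (enn2ereal (ennreal s * emeasure lborel U))"
    by (rule e2ennreal_mono)
  then show ?thesis unfolding U_def by simp
qed

lemma measure_le_young_conj:
  assumes young: "young_finite A" and C2: "C2 A" and s: "0 < s"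
  shows "ennreal (s / 2) * emeasure lborel {\<sigma>. 0 < \<sigma> \<and> \<sigma> \<le> 1 \<and> 2 * secant A \<sigma> \<le> s}
    \<le> e2ennreal (young_conj A s)"
proof (cases "{\<sigma>. 0 < \<sigma> \<and> \<sigma> \<le> 1 \<and> 2 * secant A \<sigma> \<le> s} = {}")
  case False
  define V where "V = {\<sigma>. 0 < \<sigma> \<and> \<sigma> \<le> 1 \<and> 2 * secant A \<sigma> \<le> s}"
  have V: "V \<noteq> {}" "bdd_above V" using False unfolding V_def by (auto intro: bdd_aboveI[where M = 1])
  define T where "T = Sup V"
  have T0: "0 \<le> T" using V cSup_upper[OF _ V(2)] by (force simp: T_def V_def)
  have "V \<subseteq> {0..T}" using cSup_upper[OF _ V(2)] by (auto simp: T_def V_def)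
  then have "emeasure lborel V \<le> emeasure lborel {0..T}" by (intro emeasure_mono) auto
  then have mV: "emeasure lborel V \<le> ennreal T" using T0 by simp
  have ge: "ereal (s / 2 * \<tau>) \<le> young_conj A s" if "\<tau> \<in> V" for \<tau>
  proof -
    have "A \<tau> \<le> \<tau> * (s / 2)" using that by (auto simp: V_def secant_def field_simps)
    then have "ereal (s / 2 * \<tau>) \<le> ereal (\<tau> * s - A \<tau>)" by simp
    also have "\<dots> \<le> young_conj A s" unfolding young_conj_def using that by (intro SUP_upper) (auto simp: V_def)
    finally show ?thesis .
  qed
  have "ereal (s / 2 * T) \<le> young_conj A s"
  proof (rule dense_le)
    fix y assume y: "y < ereal (s / 2 * T)"
    show "y \<le> young_conj A s"
    proof (cases y)
      case (real y')
      then have "y' / (s / 2) < T" using y s by (simp add: field_simps)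
      then obtain \<tau> where \<tau>: "\<tau> \<in> V" "y' / (s / 2) < \<tau>" unfolding T_def using less_cSup_iff[OF V] by blast
      then have "y \<le> ereal (s / 2 * \<tau>)" using real s by (simp add: field_simps)
      also have "\<dots> \<le> young_conj A s" by (rule ge[OF \<tau>(1)])
      finally show ?thesis .
    qed (use y in auto)
  qed
  have "ennreal (s / 2) * emeasure lborel V \<le> ennreal (s / 2) * ennreal T" using mV by (rule mult_left_mono) simp
  also have "\<dots> = e2ennreal (ereal (s / 2 * T))" using s T0 by (simp add: ennreal_mult[symmetric])
  also have "\<dots> \<le> e2ennreal (young_conj A s)" using \<open>ereal (s / 2 * T) \<le> young_conj A s\<close> by (rule e2ennreal_mono)
  finally show ?thesis unfolding V_def .
next
  case True
  then show ?thesis by (simp only: emeasure_empty mult_zero_right zero_le)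
qed

lemma nprime_eq: "n \<ge> 2 \<Longrightarrow> nprime n = 1 + 1 / (real n - 1)"
  unfolding nprime_def by (simp add: field_simps)

lemma Efun_le_powr_Efun_1:
  assumes "1 \<le> \<tau>"
  shows "Efun n A \<tau> \<le> ennreal (\<tau> powr nprime n) * Efun n A 1"
proof -
  have "(\<integral>\<^sup>+ s\<in>{\<tau>..}. e2ennreal (young_conj A s) * ennreal (s powr (-1 - nprime n)) \<partial>lborel)
      \<le> (\<integral>\<^sup>+ s\<in>{1..}. e2ennreal (young_conj A s) * ennreal (s powr (-1 - nprime n)) \<partial>lborel)"
    using assms by (intro nn_integral_mono) (auto simp: indicator_def)
  then show ?thesis unfolding Efun_def by (auto intro: mult_left_mono)
qed

text \<open>Insert the bound of \<open>young_conj_le_measure\<close> and integrate in \<open>s\<close> first.\<close>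

lemma Efun_1_le:
  assumes n: "n \<ge> 2" and young: "young_finite A" and C2: "C2 A"
  defines "p \<equiv> 1 / (real n - 1)"
  shows "Efun n A 1 \<le> (\<integral>\<^sup>+ \<sigma>. indicator {0<..} \<sigma> * ennreal (max 1 (secant A \<sigma>) powr (- p) / p) \<partial>lborel)"
proof -
  define np where "np = nprime n"
  have p: "0 < p" "np = 1 + p" using n nprime_eq[OF n] by (auto simp: p_def np_def)
  have [measurable]: "secant A \<in> borel_measurable borel" using young C2 by (rule borel_measurable_secant)
  have integrand_le: "e2ennreal (young_conj A s) * ennreal (s powr (-1 - np)) * indicator {1..} s
      \<le> (\<integral>\<^sup>+ \<sigma>. (if \<sigma> \<in> {0<..} \<and> max 1 (secant A \<sigma>) \<le> s then ennreal (s powr (- np)) else 0) \<partial>lborel)" for s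
  proof (cases "1 \<le> s")
    case True
    define U where "U = {\<sigma>. 0 < \<sigma> \<and> secant A \<sigma> < s}"
    have U[measurable]: "U \<in> sets lborel" unfolding U_def by measurable
    have "s * s powr (-1 - np) = s powr (- np)" using True by (simp add: powr_add[symmetric] powr_mult_base)
    then have pw: "ennreal s * ennreal (s powr (-1 - np)) = ennreal (s powr (- np))"
      using True by (simp add: ennreal_mult[symmetric])
    have "e2ennreal (young_conj A s) * ennreal (s powr (-1 - np))
        \<le> ennreal s * emeasure lborel U * ennreal (s powr (-1 - np))"
      unfolding U_def using True by (intro mult_right_mono young_conj_le_measure[OF young C2]) auto
    also have "\<dots> = ennreal (s powr (- np)) * emeasure lborel U" by (metis pw mult.assoc mult.commute)
    also have "\<dots> = (\<integral>\<^sup>+ \<sigma>. ennreal (s powr (- np)) * indicator U \<sigma> \<partial>lborel)"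
      by (rule nn_integral_cmult_indicator[OF U, symmetric])
    also have "\<dots> \<le> (\<integral>\<^sup>+ \<sigma>. (if \<sigma> \<in> {0<..} \<and> max 1 (secant A \<sigma>) \<le> s then ennreal (s powr (- np)) else 0) \<partial>lborel)"
      using True by (intro nn_integral_mono) (auto simp: U_def indicator_def)
    finally show ?thesis using True by simp
  qed simp
  have "Efun n A 1 = (\<integral>\<^sup>+ s. e2ennreal (young_conj A s) * ennreal (s powr (-1 - np)) * indicator {1..} s \<partial>lborel)"
    by (simp add: Efun_def np_def)
  also have "\<dots> \<le> (\<integral>\<^sup>+ s. (\<integral>\<^sup>+ \<sigma>. (if \<sigma> \<in> {0<..} \<and> max 1 (secant A \<sigma>) \<le> s then ennreal (s powr (- np)) else 0) \<partial>lborel) \<partial>lborel)"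
    by (intro nn_integral_mono integrand_le)
  also have "\<dots> = (\<integral>\<^sup>+ \<sigma>. indicator {0<..} \<sigma> * ennreal (- (max 1 (secant A \<sigma>) powr (- np + 1)) / (- np + 1)) \<partial>lborel)"
    using p by (intro nn_integral_threshold_powr) auto
  also have "\<dots> = (\<integral>\<^sup>+ \<sigma>. indicator {0<..} \<sigma> * ennreal (max 1 (secant A \<sigma>) powr (- p) / p) \<partial>lborel)"
    using p by (simp add: field_simps)
  finally show ?thesis .
qed

lemma Efun_1_finite:
  assumes n: "n \<ge> 2" and young: "young_finite A" and C1: "C1 n A" and C2: "C2 A"
  shows "Efun n A 1 < \<infinity>"
proof -
  define p where "p = 1 / (real n - 1)"
  have p: "0 < p" using n by (simp add: p_def)
  have [measurable]: "secant A \<in> borel_measurable borel" using young C2 by (rule borel_measurable_secant)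
  \<comment> \<open>split \<open>(0,\<infinity>)\<close> at \<open>1\<close>; on \<open>[1,\<infinity>)\<close> drop the \<open>max\<close> and use (C1)\<close>
  have integrand_le: "indicator {0<..} \<sigma> * ennreal (max 1 (secant A \<sigma>) powr (- p) / p)
      \<le> ennreal (1 / p) * indicator {0<..<1} \<sigma> + ennreal (1 / p) * (ennreal (inverse (secant A \<sigma>) powr p) * indicator {1..} \<sigma>)"
    for \<sigma> :: real
  proof (cases "0 < \<sigma>")
    case True
    have "max 1 (secant A \<sigma>) powr (- p) \<le> 1 powr (- p)" using p by (intro powr_mono2') auto
    then have "max 1 (secant A \<sigma>) powr (- p) \<le> 1" by simp
    moreover have "max 1 (secant A \<sigma>) powr (- p) \<le> inverse (secant A \<sigma>) powr p"
    proof -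
      have "max 1 (secant A \<sigma>) powr (- p) \<le> secant A \<sigma> powr (- p)"
        using secant_pos[OF C2 True] p by (intro powr_mono2') auto
      also have "\<dots> = inverse (secant A \<sigma>) powr p" by (simp add: powr_minus inverse_powr)
      finally show ?thesis .
    qed
    ultimately show ?thesis
      using True p by (cases "\<sigma> < 1") (auto simp: ennreal_mult[symmetric] divide_right_mono intro!: ennreal_leI)
  qed simp
  have conv: "(\<integral>\<^sup>+ \<sigma>\<in>{1..}. ennreal (inverse (secant A \<sigma>) powr p) \<partial>lborel)
      = (\<integral>\<^sup>+ \<sigma>\<in>{1..}. ennreal ((\<sigma> / A \<sigma>) powr p) \<partial>lborel)"
    by (intro nn_integral_cong) (simp add: secant_def indicator_def)
  have "Efun n A 1 \<le> (\<integral>\<^sup>+ \<sigma>. ennreal (1 / p) * indicator {0<..<1} \<sigma>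
      + ennreal (1 / p) * (ennreal (inverse (secant A \<sigma>) powr p) * indicator {1..} \<sigma>) \<partial>lborel)"
    using Efun_1_le[OF n young C2] unfolding p_def[symmetric]
    by (rule order_trans) (intro nn_integral_mono integrand_le)
  also have "\<dots> = ennreal (1 / p) * emeasure lborel {0<..<1::real}
      + ennreal (1 / p) * (\<integral>\<^sup>+ \<sigma>\<in>{1..}. ennreal ((\<sigma> / A \<sigma>) powr p) \<partial>lborel)"
    by (subst nn_integral_add) (auto simp: nn_integral_cmult_indicator nn_integral_cmult conv[symmetric])
  also have "\<dots> < \<infinity>" using C1 n unfolding C1_def p_def by (simp add: ennreal_mult_less_top)
  finally show ?thesis .
qed

definition secant_integral :: "nat \<Rightarrow> (real \<Rightarrow> real) \<Rightarrow> real \<Rightarrow> ennreal" where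
  "secant_integral n A \<tau> =
     (\<integral>\<^sup>+ \<sigma>. indicator {0<..1} \<sigma> * ennreal (max \<tau> (2 * secant A \<sigma>) powr (- (1 / (real n - 1)))) \<partial>lborel)"

lemma tail_integrand_ge:
  assumes n: "n \<ge> 2" and young: "young_finite A" and C2: "C2 A" and \<tau>: "0 < \<tau>"
  shows "ennreal (1 / 2) *
      (\<integral>\<^sup>+ \<sigma>. (if \<sigma> \<in> {0<..1} \<and> max \<tau> (2 * secant A \<sigma>) \<le> s then ennreal (s powr (- nprime n)) else 0) \<partial>lborel)
    \<le> e2ennreal (young_conj A s) * ennreal (s powr (-1 - nprime n)) * indicator {\<tau>..} s"
proof (cases "\<tau> \<le> s")
  case True
  then have s: "0 < s" using \<tau> by auto
  define V where "V = {\<sigma>. 0 < \<sigma> \<and> \<sigma> \<le> 1 \<and> 2 * secant A \<sigma> \<le> s}"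
  have V[measurable]: "V \<in> sets lborel" unfolding V_def using young C2 by measurable
  have "(\<integral>\<^sup>+ \<sigma>. (if \<sigma> \<in> {0<..1} \<and> max \<tau> (2 * secant A \<sigma>) \<le> s then ennreal (s powr (- nprime n)) else 0) \<partial>lborel)
      = (\<integral>\<^sup>+ \<sigma>. ennreal (s powr (- nprime n)) * indicator V \<sigma> \<partial>lborel)"
    using True by (intro nn_integral_cong) (auto simp: V_def indicator_def)
  also have "\<dots> = ennreal (s powr (- nprime n)) * emeasure lborel V" using V by (rule nn_integral_cmult_indicator)
  moreover have "ennreal (1 / 2) * ennreal (s powr (- nprime n)) = ennreal (s / 2) * ennreal (s powr (-1 - nprime n))"
  proof -
    have h: "1 / 2 * s powr (- nprime n) = s / 2 * s powr (-1 - nprime n)"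
      using s by (simp add: powr_add[symmetric] powr_mult_base)
    have "ennreal (1 / 2) * ennreal (s powr (- nprime n)) = ennreal (1 / 2 * s powr (- nprime n))"
      by (rule ennreal_mult[symmetric]) auto
    also have "\<dots> = ennreal (s / 2) * ennreal (s powr (-1 - nprime n))"
      unfolding h using s by (intro ennreal_mult) auto
    finally show ?thesis .
  qed
  ultimately have "ennreal (1 / 2) *
      (\<integral>\<^sup>+ \<sigma>. (if \<sigma> \<in> {0<..1} \<and> max \<tau> (2 * secant A \<sigma>) \<le> s then ennreal (s powr (- nprime n)) else 0) \<partial>lborel)
      = ennreal (s / 2) * emeasure lborel V * ennreal (s powr (-1 - nprime n))"
    by (metis mult.assoc mult.commute)
  also have "\<dots> \<le> e2ennreal (young_conj A s) * ennreal (s powr (-1 - nprime n))"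
    unfolding V_def by (intro mult_right_mono measure_le_young_conj[OF young C2 s]) simp
  finally show ?thesis using True by simp
qed simp

lemma Efun_ge_secant_integral:
  assumes n: "n \<ge> 2" and young: "young_finite A" and C2: "C2 A" and \<tau>: "0 < \<tau>"
  shows "ennreal ((real n - 1) / 2 * \<tau> powr nprime n) * secant_integral n A \<tau> \<le> Efun n A \<tau>"
proof -
  define p where "p = 1 / (real n - 1)"
  have p: "0 < p" "nprime n = 1 + p" using n nprime_eq[OF n] by (auto simp: p_def)
  have [measurable]: "secant A \<in> borel_measurable borel" using young C2 by (rule borel_measurable_secant)
  define F where "F s = (\<integral>\<^sup>+ \<sigma>. (if \<sigma> \<in> {0<..1} \<and> max \<tau> (2 * secant A \<sigma>) \<le> s then ennreal (s powr (- nprime n)) else 0) \<partial>lborel)" for s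
  have "(\<integral>\<^sup>+ s. F s \<partial>lborel)
      = (\<integral>\<^sup>+ \<sigma>. indicator {0<..1} \<sigma> * ennreal (- (max \<tau> (2 * secant A \<sigma>) powr (- nprime n + 1)) / (- nprime n + 1)) \<partial>lborel)"
    unfolding F_def using \<tau> p by (intro nn_integral_threshold_powr) auto
  also have "\<dots> = (\<integral>\<^sup>+ \<sigma>. ennreal (real n - 1) * (indicator {0<..1} \<sigma> * ennreal (max \<tau> (2 * secant A \<sigma>) powr (- p))) \<partial>lborel)"
    using n p by (intro nn_integral_cong) (simp add: p_def ennreal_mult' mult_ac)
  also have "\<dots> = ennreal (real n - 1) * secant_integral n A \<tau>"
    unfolding secant_integral_def p_def by (rule nn_integral_cmult) measurable
  finally have F_integral: "(\<integral>\<^sup>+ s. F s \<partial>lborel) = ennreal (real n - 1) * secant_integral n A \<tau>" .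
  have [measurable]: "F \<in> borel_measurable lborel" unfolding F_def by measurable
  have "ennreal (1 / 2) * (ennreal (real n - 1) * secant_integral n A \<tau>) = (\<integral>\<^sup>+ s. ennreal (1 / 2) * F s \<partial>lborel)"
    unfolding F_integral[symmetric] by (rule nn_integral_cmult[symmetric]) measurable
  also have "\<dots> \<le> (\<integral>\<^sup>+ s\<in>{\<tau>..}. e2ennreal (young_conj A s) * ennreal (s powr (-1 - nprime n)) \<partial>lborel)"
    unfolding F_def by (intro nn_integral_mono tail_integrand_ge[OF n young C2 \<tau>])
  finally have tail: "ennreal (1 / 2) * (ennreal (real n - 1) * secant_integral n A \<tau>)
      \<le> (\<integral>\<^sup>+ s\<in>{\<tau>..}. e2ennreal (young_conj A s) * ennreal (s powr (-1 - nprime n)) \<partial>lborel)" .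
  have half: "ennreal (1 / 2 * (real n - 1)) = ennreal (1 / 2) * ennreal (real n - 1)"
    using n by (intro ennreal_mult) auto
  have "ennreal ((real n - 1) / 2 * \<tau> powr nprime n) = ennreal (\<tau> powr nprime n * (1 / 2 * (real n - 1)))"
    by (rule arg_cong[where f = ennreal]) simp
  also have "\<dots> = ennreal (\<tau> powr nprime n) * (ennreal (1 / 2) * ennreal (real n - 1))"
    unfolding half[symmetric] using n by (intro ennreal_mult) auto
  finally have "ennreal ((real n - 1) / 2 * \<tau> powr nprime n) = ennreal (\<tau> powr nprime n) * (ennreal (1 / 2) * ennreal (real n - 1))" .
  then have "ennreal ((real n - 1) / 2 * \<tau> powr nprime n) * secant_integral n A \<tau>
      = ennreal (\<tau> powr nprime n) * (ennreal (1 / 2) * (ennreal (real n - 1) * secant_integral n A \<tau>))"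
    by (simp add: mult.assoc)
  also have "\<dots> \<le> Efun n A \<tau>" unfolding Efun_def using tail by (rule mult_left_mono) simp
  finally show ?thesis .
qed

lemma secant_integral_antimono:
  assumes "n \<ge> 2" "0 < \<tau>" "\<tau> \<le> \<tau>'"
  shows "secant_integral n A \<tau>' \<le> secant_integral n A \<tau>"
  unfolding secant_integral_def
  using assms by (intro nn_integral_mono mult_left_mono ennreal_leI powr_mono2') auto

lemma secant_integral_ge:
  assumes n: "n \<ge> 2" and young: "young_finite A" and C2: "C2 A" and \<tau>: "0 < \<tau>"
  shows "ennreal (max \<tau> (2 * secant A 1) powr (- (1 / (real n - 1)))) \<le> secant_integral n A \<tau>"
proof -
  have "ennreal (max \<tau> (2 * secant A 1) powr (- (1 / (real n - 1))))
      = (\<integral>\<^sup>+ (\<sigma>::real). ennreal (max \<tau> (2 * secant A 1) powr (- (1 / (real n - 1)))) * indicator {0<..1} \<sigma> \<partial>lborel)"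
    using nn_integral_cmult_indicator[of "{0<..1::real}" lborel "ennreal (max \<tau> (2 * secant A 1) powr (- (1 / (real n - 1))))"]
    by (simp add: eq_commute)
  also have "\<dots> \<le> secant_integral n A \<tau>"
    unfolding secant_integral_def
  proof (intro nn_integral_mono)
    fix \<sigma> :: real
    have "secant A \<sigma> \<le> secant A 1" if "\<sigma> \<in> {0<..1}" using that by (intro monoD[OF secant_mono[OF young C2]]) simp
    then show "ennreal (max \<tau> (2 * secant A 1) powr (- (1 / (real n - 1)))) * indicator {0<..1} \<sigma>
        \<le> indicator {0<..1} \<sigma> * ennreal (max \<tau> (2 * secant A \<sigma>) powr - (1 / (real n - 1)))"
      using n \<tau> by (cases "\<sigma> \<in> {0<..1}") (auto intro!: ennreal_leI powr_mono2')
  qed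
  finally show ?thesis .
qed

lemma nn_integral_secant_powr_infinite:
  assumes n: "n \<ge> 2" and young: "young_finite A" and C2: "C2 A" and C3: "C3 n A"
  shows "(\<integral>\<^sup>+ \<sigma>. indicator {0<..1} \<sigma> * ennreal ((2 * secant A \<sigma>) powr (- (1 / (real n - 1)))) \<partial>lborel) = \<infinity>"
proof -
  define p where "p = 1 / (real n - 1)"
  have [measurable]: "secant A \<in> borel_measurable borel" using young C2 by (rule borel_measurable_secant)
  \<comment> \<open>on \<open>(0,1]\<close> the integrand of (C3) is \<open>2\<^sup>p\<close> times this one\<close>
  have "\<infinity> = (\<integral>\<^sup>+ t\<in>{0<..1}. ennreal ((t / A t) powr p) \<partial>lborel)"
    using C3 n unfolding C3_def p_def by auto
  also have "\<dots> = (\<integral>\<^sup>+ t. ennreal (2 powr p) * (indicator {0<..1} t * ennreal ((2 * secant A t) powr (- p))) \<partial>lborel)"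
  proof (intro nn_integral_cong)
    fix t :: real
    have "(t / A t) powr p = 2 powr p * (2 * secant A t) powr (- p)" if "t \<in> {0<..1}"
    proof -
      have "(t / A t) powr p = (2 * inverse (2 * secant A t)) powr p"
        using that secant_pos[OF C2, of t] by (simp add: secant_def field_simps)
      also have "\<dots> = 2 powr p * (2 * secant A t) powr (- p)"
        using secant_pos[OF C2, of t] that by (simp add: powr_mult powr_minus inverse_powr)
      finally show ?thesis .
    qed
    then show "ennreal ((t / A t) powr p) * indicator {0<..1} t
        = ennreal (2 powr p) * (indicator {0<..1} t * ennreal ((2 * secant A t) powr (- p)))"
      by (cases "t \<in> {0<..1}") (simp_all add: ennreal_mult)
  qed
  also have "\<dots> = ennreal (2 powr p) * (\<integral>\<^sup>+ t. indicator {0<..1} t * ennreal ((2 * secant A t) powr (- p)) \<partial>lborel)"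
    by (rule nn_integral_cmult) measurable
  finally have "ennreal (2 powr p) * (\<integral>\<^sup>+ t. indicator {0<..1} t * ennreal ((2 * secant A t) powr (- p)) \<partial>lborel) = \<infinity>"
    by simp
  then show ?thesis unfolding p_def by (simp add: ennreal_mult_eq_top_iff)
qed

lemma secant_integral_unbounded:
  assumes n: "n \<ge> 2" and young: "young_finite A" and C2: "C2 A" and C3: "C3 n A"
  shows "\<exists>\<delta>>0. ennreal M < secant_integral n A \<delta>"
proof -
  define p where "p = 1 / (real n - 1)"
  have p: "0 < p" using n by (simp add: p_def)
  have [measurable]: "secant A \<in> borel_measurable borel" using young C2 by (rule borel_measurable_secant)
  define f where "f k \<sigma> = indicator {0<..1} \<sigma> * ennreal (max (1 / real (Suc k)) (2 * secant A \<sigma>) powr (- p))" for k \<sigma>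
  have "max (1 / real (Suc (Suc k))) x \<le> max (1 / real (Suc k)) x" for k x
    by (intro max.mono) (auto simp: frac_le)
  then have "incseq f"
    unfolding f_def using p
    by (intro incseq_SucI le_funI mult_left_mono ennreal_leI powr_mono2') (auto simp: less_max_iff_disj)
  moreover have "f k \<in> borel_measurable lborel" for k unfolding f_def by measurable
  ultimately have "(\<integral>\<^sup>+ \<sigma>. (SUP k. f k \<sigma>) \<partial>lborel) = (SUP k. integral\<^sup>N lborel (f k))"
    by (rule nn_integral_monotone_convergence_SUP)
  also have "\<dots> = (SUP k. secant_integral n A (1 / real (Suc k)))"
    unfolding secant_integral_def f_def p_def ..
  finally have mono_conv: "(\<integral>\<^sup>+ \<sigma>. (SUP k. f k \<sigma>) \<partial>lborel) = (SUP k. secant_integral n A (1 / real (Suc k)))" .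
  \<comment> \<open>pointwise, \<open>f\<^sub>k\<close> reaches the integrand of \<open>nn_integral_secant_powr_infinite\<close> once \<open>1/(k+1) < 2 secant A \<sigma>\<close>\<close>
  have le_SUP: "indicator {0<..1} \<sigma> * ennreal ((2 * secant A \<sigma>) powr (- p)) \<le> (SUP k. f k \<sigma>)" for \<sigma>
  proof (cases "\<sigma> \<in> {0<..1}")
    case True
    then have "0 < 2 * secant A \<sigma>" using secant_pos[OF C2, of \<sigma>] by simp
    then obtain k where "inverse (real (Suc k)) < 2 * secant A \<sigma>" using reals_Archimedean by blast
    then have "f k \<sigma> = indicator {0<..1} \<sigma> * ennreal ((2 * secant A \<sigma>) powr (- p))"
      unfolding f_def by (simp add: inverse_eq_divide max_def)
    then show ?thesis by (metis SUP_upper UNIV_I)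
  qed simp
  have "(\<integral>\<^sup>+ \<sigma>. indicator {0<..1} \<sigma> * ennreal ((2 * secant A \<sigma>) powr (- p)) \<partial>lborel)
      \<le> (\<integral>\<^sup>+ \<sigma>. (SUP k. f k \<sigma>) \<partial>lborel)"
    by (intro nn_integral_mono le_SUP)
  then have "\<infinity> \<le> (\<integral>\<^sup>+ \<sigma>. (SUP k. f k \<sigma>) \<partial>lborel)"
    using nn_integral_secant_powr_infinite[OF n young C2 C3] by (simp add: p_def)
  then have SUP_top: "(SUP k. secant_integral n A (1 / real (Suc k))) = \<infinity>" unfolding mono_conv by (simp add: top_unique)
  have "ennreal M < (SUP k. secant_integral n A (1 / real (Suc k)))" unfolding SUP_top by simp
  then obtain k where "ennreal M < secant_integral n A (1 / real (Suc k))" by (auto simp: less_SUP_iff)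
  then show ?thesis by (intro exI[of _ "1 / real (Suc k)"]) auto
qed

lemma Efun_ge_power_near_0:
  assumes n: "n \<ge> 2" and young: "young_finite A" and C2: "C2 A" and C3: "C3 n A" and M: "0 \<le> M"
  shows "\<exists>\<delta>>0. \<forall>\<tau>. 0 \<le> \<tau> \<and> \<tau> \<le> \<delta> \<longrightarrow> ennreal (M * \<tau> powr nprime n) \<le> Efun n A \<tau>"
proof -
  define M' where "M' = 2 * M / (real n - 1)"
  obtain \<delta> where \<delta>: "\<delta> > 0" "ennreal M' < secant_integral n A \<delta>"
    using secant_integral_unbounded[OF n young C2 C3] by blast
  have "ennreal (M * \<tau> powr nprime n) \<le> Efun n A \<tau>" if \<tau>: "0 \<le> \<tau>" "\<tau> \<le> \<delta>" for \<tau>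
  proof (cases "\<tau> = 0")
    case False
    then have \<tau>0: "0 < \<tau>" using \<tau> by auto
    have "ennreal (M * \<tau> powr nprime n) = ennreal ((real n - 1) / 2 * \<tau> powr nprime n * M')"
      by (rule arg_cong[where f = ennreal]) (use n in \<open>simp add: M'_def field_simps\<close>)
    also have "\<dots> = ennreal ((real n - 1) / 2 * \<tau> powr nprime n) * ennreal M'"
      using n M by (intro ennreal_mult) (auto simp: M'_def)
    also have "\<dots> \<le> ennreal ((real n - 1) / 2 * \<tau> powr nprime n) * secant_integral n A \<tau>"
      using order_trans[OF less_imp_le[OF \<delta>(2)] secant_integral_antimono[OF n \<tau>0 \<tau>(2)]]
      by (rule mult_left_mono) simp
    also have "\<dots> \<le> Efun n A \<tau>" by (rule Efun_ge_secant_integral[OF n young C2 \<tau>0])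
    finally show ?thesis .
  qed simp
  then show ?thesis using \<delta>(1) by blast
qed

lemma Efun_ge_linear:
  assumes n: "n \<ge> 2" and young: "young_finite A" and C2: "C2 A" and \<delta>: "0 < \<delta>"
  shows "\<exists>\<kappa>>0. \<forall>\<tau>\<ge>\<delta>. ennreal (\<kappa> * \<tau>) \<le> Efun n A \<tau>"
proof -
  define p where "p = 1 / (real n - 1)"
  have p: "0 < p" "nprime n = 1 + p" using n nprime_eq[OF n] by (auto simp: p_def)
  define D where "D = 2 * secant A 1"
  have D: "0 < D" using secant_pos[OF C2, of 1] by (simp add: D_def)
  define \<mu> where "\<mu> = min 1 (\<delta> / D)"
  have \<mu>: "0 < \<mu>" using \<delta> D by (simp add: \<mu>_def)
  define \<kappa> where "\<kappa> = (real n - 1) / 2 * \<mu> powr p"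
  have "ennreal (\<kappa> * \<tau>) \<le> Efun n A \<tau>" if \<tau>: "\<delta> \<le> \<tau>" for \<tau>
  proof -
    have \<tau>0: "0 < \<tau>" using \<tau> \<delta> by auto
    define m where "m = max \<tau> D"
    have m: "0 < m" using D by (simp add: m_def)
    have "\<mu> \<le> \<tau> / m"
    proof (cases "D \<le> \<tau>")
      case True
      then show ?thesis using \<tau>0 by (simp add: \<mu>_def m_def)
    next
      case False
      then have "\<delta> / D \<le> \<tau> / m" using \<tau> D by (simp add: m_def divide_right_mono)
      then show ?thesis by (simp add: \<mu>_def)
    qed
    then have "\<mu> powr p \<le> (\<tau> / m) powr p" using \<mu> p by (intro powr_mono2) auto
    also have "\<dots> = \<tau> powr p * m powr (- p)" using \<tau>0 m by (simp add: powr_divide powr_minus_divide)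
    finally have "\<tau> * \<mu> powr p \<le> \<tau> * (\<tau> powr p * m powr (- p))" using \<tau>0 by (intro mult_left_mono) auto
    also have "\<dots> = \<tau> powr nprime n * m powr (- p)" using \<tau>0 by (simp add: p(2) powr_add)
    finally have "(real n - 1) / 2 * (\<tau> * \<mu> powr p) \<le> (real n - 1) / 2 * (\<tau> powr nprime n * m powr (- p))"
      using n by (intro mult_left_mono) auto
    then have "\<kappa> * \<tau> \<le> (real n - 1) / 2 * \<tau> powr nprime n * m powr (- p)"
      unfolding \<kappa>_def by (simp add: mult_ac)
    then have "ennreal (\<kappa> * \<tau>) \<le> ennreal ((real n - 1) / 2 * \<tau> powr nprime n * m powr (- p))"
      by (rule ennreal_leI)
    also have "\<dots> = ennreal ((real n - 1) / 2 * \<tau> powr nprime n) * ennreal (m powr (- p))"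
      using n by (intro ennreal_mult) auto
    also have "\<dots> \<le> ennreal ((real n - 1) / 2 * \<tau> powr nprime n) * secant_integral n A \<tau>"
      using secant_integral_ge[OF n young C2 \<tau>0] by (intro mult_left_mono) (simp_all add: m_def D_def p_def)
    also have "\<dots> \<le> Efun n A \<tau>" by (rule Efun_ge_secant_integral[OF n young C2 \<tau>0])
    finally show ?thesis .
  qed
  moreover have "0 < \<kappa>" using n \<mu> by (simp add: \<kappa>_def)
  ultimately show ?thesis by blast
qed

lemma ereal_minus_enn2ereal_le:
  assumes "ennreal x \<le> E" "0 \<le> x"
  shows "ereal y - enn2ereal E \<le> ereal (y - x)"
proof -
  have "ereal x \<le> enn2ereal E" using assms by (metis enn2ereal_ennreal less_eq_ennreal.rep_eq)
  then show ?thesis by (cases "enn2ereal E") auto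
qed

lemma ereal_le_minus_enn2ereal:
  assumes "E \<le> ennreal x" "0 \<le> x"
  shows "ereal (y - x) \<le> ereal y - enn2ereal E"
proof -
  have "enn2ereal E \<le> ereal x" using assms by (metis enn2ereal_ennreal less_eq_ennreal.rep_eq)
  then show ?thesis using enn2ereal_nonneg[of E] by (cases "enn2ereal E") auto
qed

lemma young_ineq_power:
  assumes n: "n \<ge> 2" and K: "0 < K"
  shows "\<exists>M\<ge>0. \<forall>\<tau>\<ge>0. \<forall>t\<ge>0. \<tau> * t \<le> M * \<tau> powr nprime n + t ^ n / K"
proof -
  define \<alpha> where "\<alpha> = (K / real n) powr (1 / real n)"
  have \<alpha>: "0 < \<alpha>" "\<alpha> powr real n = K / real n" using K n by (simp_all add: \<alpha>_def powr_powr)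
  have np: "nprime n > 1" "1 / nprime n + 1 / real n = 1" using n by (simp_all add: nprime_def field_simps)
  define M where "M = \<alpha> powr nprime n / nprime n"
  \<comment> \<open>Young's inequality for the product \<open>(\<alpha> \<tau>) (t/\<alpha>)\<close> with exponents \<open>n'\<close> and \<open>n\<close>\<close>
  have "\<tau> * t \<le> M * \<tau> powr nprime n + t ^ n / K" if "0 \<le> \<tau>" "0 \<le> t" for \<tau> t
  proof -
    have "(\<alpha> * \<tau>) * (t / \<alpha>) \<le> (\<alpha> * \<tau>) powr nprime n / nprime n + (t / \<alpha>) powr real n / real n"
      using \<alpha> that np n by (intro Youngs_inequality) auto
    moreover have "(\<alpha> * \<tau>) * (t / \<alpha>) = \<tau> * t" using \<alpha> by simp
    moreover have "(\<alpha> * \<tau>) powr nprime n = \<alpha> powr nprime n * \<tau> powr nprime n" using \<alpha> that by (simp add: powr_mult)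
    moreover have "t powr real n = t ^ n" using that n by (cases "t = 0") (auto simp: powr_realpow)
    then have "(t / \<alpha>) powr real n / real n = t ^ n / K" using \<alpha> that n K by (simp add: powr_divide field_simps)
    ultimately show ?thesis by (simp add: M_def field_simps)
  qed
  moreover have "0 \<le> M" using np by (simp add: M_def)
  ultimately show ?thesis by blast
qed

lemma Bfun_eq_SUP: "n \<noteq> 1 \<Longrightarrow> Bfun n A t = (SUP \<tau>\<in>{0..}. ereal (\<tau> * t) - enn2ereal (Efun n A \<tau>))"
  by (simp add: Bfun_def)

lemma Bfun_le_power_dim_ge_2:
  assumes n: "n \<ge> 2" and young: "young_finite A" and C2: "C2 A" and C3: "C3 n A" and K: "0 < K"
  shows "\<exists>\<kappa>>0. \<forall>t. 0 \<le> t \<and> t \<le> \<kappa> \<longrightarrow> Bfun n A t \<le> ereal (t ^ n / K)"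
proof -
  obtain M where M: "0 \<le> M" "\<And>\<tau> t. 0 \<le> \<tau> \<Longrightarrow> 0 \<le> t \<Longrightarrow> \<tau> * t \<le> M * \<tau> powr nprime n + t ^ n / K"
    using young_ineq_power[OF n K] by blast
  obtain \<delta> where \<delta>: "\<delta> > 0" "\<And>\<tau>. 0 \<le> \<tau> \<Longrightarrow> \<tau> \<le> \<delta> \<Longrightarrow> ennreal (M * \<tau> powr nprime n) \<le> Efun n A \<tau>"
    using Efun_ge_power_near_0[OF n young C2 C3 M(1)] by blast
  obtain \<kappa> where \<kappa>: "\<kappa> > 0" "\<And>\<tau>. \<tau> \<ge> \<delta> \<Longrightarrow> ennreal (\<kappa> * \<tau>) \<le> Efun n A \<tau>"
    using Efun_ge_linear[OF n young C2 \<delta>(1)] by blast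
  \<comment> \<open>small \<open>\<tau>\<close>: Young's inequality; large \<open>\<tau>\<close>: \<open>\<tau> t - E(\<tau>) \<le> (t - \<kappa>) \<tau> \<le> 0\<close>\<close>
  have "ereal (\<tau> * t) - enn2ereal (Efun n A \<tau>) \<le> ereal (t ^ n / K)" if t: "0 \<le> t" "t \<le> \<kappa>" and \<tau>: "0 \<le> \<tau>" for t \<tau>
  proof (cases "\<tau> \<le> \<delta>")
    case True
    have "ereal (\<tau> * t) - enn2ereal (Efun n A \<tau>) \<le> ereal (\<tau> * t - M * \<tau> powr nprime n)"
      using \<delta>(2)[OF \<tau> True] M(1) \<tau> by (intro ereal_minus_enn2ereal_le) auto
    also have "\<dots> \<le> ereal (t ^ n / K)" using M(2)[OF \<tau> t(1)] by simp
    finally show ?thesis .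
  next
    case False
    have "ereal (\<tau> * t) - enn2ereal (Efun n A \<tau>) \<le> ereal (\<tau> * t - \<kappa> * \<tau>)"
      using \<kappa> False \<tau> by (intro ereal_minus_enn2ereal_le) auto
    also have "\<dots> \<le> ereal (t ^ n / K)"
    proof -
      have "\<tau> * t \<le> \<kappa> * \<tau>" using mult_left_mono[OF t(2) \<tau>] by (simp add: mult.commute)
      moreover have "0 \<le> t ^ n / K" using t K by simp
      ultimately show ?thesis by simp
    qed
    finally show ?thesis .
  qed
  then show ?thesis using \<kappa>(1) n by (intro exI[of _ \<kappa>]) (auto simp: Bfun_eq_SUP intro!: SUP_least)
qed

lemma Bfun_ge_power_dim_ge_2:
  assumes n: "n \<ge> 2" and young: "young_finite A" and C1: "C1 n A" and C2: "C2 A"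
  shows "\<exists>c>0. \<exists>T. \<forall>t\<ge>T. ereal (c * t ^ n) \<le> Bfun n A t"
proof -
  define e where "e = enn2real (Efun n A 1)"
  have E1: "Efun n A 1 = ennreal e" "0 \<le> e"
    using Efun_1_finite[OF n young C1 C2] by (simp_all add: e_def ennreal_enn2real less_top)
  define q where "q = 2 * (e + 1)"
  have q: "1 \<le> q" "e / q \<le> 1 / 2" using E1 by (simp_all add: q_def field_simps)
  \<comment> \<open>test the supremum defining \<open>B(t)\<close> at \<open>\<tau> = (t/q)\<^sup>n\<^sup>-\<^sup>1\<close>, where \<open>E(\<tau>) \<le> \<tau>\<^sup>n\<^sup>' E(1) = (t/q)\<^sup>n e\<close>\<close>
  have "ereal (1 / (2 * q ^ (n - 1)) * t ^ n) \<le> Bfun n A t" if t: "q \<le> t" for t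
  proof -
    define \<tau> where "\<tau> = (t / q) ^ (n - 1)"
    have tq: "1 \<le> t / q" using t q by simp
    have \<tau>: "1 \<le> \<tau>" unfolding \<tau>_def using tq by (rule one_le_power)
    have "\<tau> powr nprime n = (t / q) ^ n"
      using tq n by (simp add: \<tau>_def powr_realpow[symmetric] powr_powr nprime_def of_nat_diff)
    moreover have "Efun n A \<tau> \<le> ennreal (\<tau> powr nprime n) * Efun n A 1" by (rule Efun_le_powr_Efun_1[OF \<tau>])
    ultimately have "Efun n A \<tau> \<le> ennreal ((t / q) ^ n * e)" using E1 tq by (simp add: ennreal_mult)
    then have "ereal (\<tau> * t - (t / q) ^ n * e) \<le> ereal (\<tau> * t) - enn2ereal (Efun n A \<tau>)"
      using E1 tq by (intro ereal_le_minus_enn2ereal) auto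
    also have "\<dots> \<le> Bfun n A t" using \<tau> n by (auto simp: Bfun_eq_SUP intro!: SUP_upper)
    finally have B: "ereal (\<tau> * t - (t / q) ^ n * e) \<le> Bfun n A t" .
    have pow: "t ^ (n - 1) * t = t ^ n" "q ^ (n - 1) * q = q ^ n" using n by (simp_all flip: power_Suc2)
    have "1 / (2 * q ^ (n - 1)) * t ^ n \<le> t ^ n / q ^ (n - 1) - t ^ n / q ^ (n - 1) * (e / q)"
      using q t mult_left_mono[OF q(2), of "t ^ n / q ^ (n - 1)"] by (simp add: field_simps)
    also have "\<dots> = \<tau> * t - (t / q) ^ n * e"
      unfolding \<tau>_def using q pow by (simp add: power_divide field_simps)
    finally show ?thesis using B by (meson ereal_less_eq(3) order_trans)
  qed
  moreover have "0 < 1 / (2 * q ^ (n - 1))" using q by simp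
  ultimately show ?thesis by blast
qed

lemma Bfun_div_dim_ge_2:
  assumes n: "n \<ge> 2" and r: "1 \<le> r" and B: "Bfun n A \<tau> \<le> ereal (r * u)"
  shows "Bfun n A (\<tau> / r) \<le> ereal u"
proof -
  have eq: "Bfun n A x = (SUP \<sigma>\<in>{0..}. ereal (\<sigma> * x) - enn2ereal (Efun n A \<sigma>))" for x
    using n by (simp add: Bfun_eq_SUP)
  show ?thesis unfolding eq
  proof (intro SUP_least)
    fix \<sigma> :: real assume "\<sigma> \<in> {0..}"
    then have "ereal (\<sigma> * \<tau>) - enn2ereal (Efun n A \<sigma>) \<le> Bfun n A \<tau>" unfolding eq by (intro SUP_upper)
    then have h: "ereal (\<sigma> * \<tau>) - enn2ereal (Efun n A \<sigma>) \<le> ereal (r * u)" using B by (rule order_trans)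
    \<comment> \<open>dividing by \<open>r \<ge> 1\<close> shrinks \<open>\<sigma> \<tau> - E(\<sigma>)\<close> at least as much as it shrinks the bound\<close>
    show "ereal (\<sigma> * (\<tau> / r)) - enn2ereal (Efun n A \<sigma>) \<le> ereal u"
    proof (cases "enn2ereal (Efun n A \<sigma>)")
      case (real e)
      have "0 \<le> e" using enn2ereal_nonneg[of "Efun n A \<sigma>"] real by simp
      then have "e / r \<le> e" using r by (simp add: divide_le_eq mult_le_cancel_left1 mult.commute)
      moreover have "(\<sigma> * \<tau> - e) / r \<le> u" using h real r by (simp add: divide_le_eq mult.commute)
      ultimately show ?thesis using real r by (simp add: diff_divide_distrib)
    qed auto
  qed
qed

lemma regular_B_dim_ge_2:
  assumes n: "n \<ge> 2" and young: "young_finite A" and C1: "C1 n A" and C2: "C2 A" and C3: "C3 n A"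
  shows "regular_B n A"
proof
  show "Bfun n A 0 \<le> 0" using n by (subst Bfun_eq_SUP) (auto intro!: SUP_least simp: zero_ereal_def[symmetric])
qed (use n Bfun_ge_power_dim_ge_2[OF n young C1 C2] Bfun_le_power_dim_ge_2[OF n young C2 C3]
      Bfun_div_dim_ge_2[OF n] in auto)

lemma regular_B_if_C123:
  assumes "n \<ge> 1" "young_finite A" "C1 n A" "C2 A" "C3 n A"
  shows "regular_B n A"
  using assms regular_B_dim_1[of A] regular_B_dim_ge_2[of n A] by (cases "n = 1") auto

theorem lemma4p8:
  fixes n :: nat and A \<phi> :: "real \<Rightarrow> real"
  assumes "n \<ge> 1"
    and "young_finite A" and "C1 n A" and "C2 A" and "C3 n A"
    and "gauge n \<phi>"
    and "filterlim (\<lambda>r. \<phi> r / r ^ n) at_top (at_right 0)"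
  shows "\<forall>r>0.
     Liminf (at_right 0) (\<lambda>t. ereal (\<phi> (Jrinv n A \<phi> r t) / psi n A \<phi> t))
       \<ge> 1 / right_lim (Theta0 (psi n A \<phi>)) (real_of_ereal (ThetaInf (Binv n A) r))
   \<and> (INF t\<in>{0<..}. ereal (\<phi> (Jrinv n A \<phi> r t) / psi n A \<phi> t))
       \<ge> 1 / right_lim (Theta (psi n A \<phi>)) (real_of_ereal (Theta (Binv n A) r))"
proof -
  interpret regular_B_gauge n A \<phi>
    using regular_B_if_C123[OF assms(1-5)] assms(6) by (simp add: regular_B_gauge_def regular_B_gauge_axioms_def)
  show ?thesis using Liminf_ratio_ge[OF _ assms(7)] INF_ratio_ge by blast
qed

end
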